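(* Let $\mathbb T$ be a syndetic time scale with $\inf\mathbb T=0$ and $\sup\mathbb T=+\infty$, let $A:\mathbb T\to\mathbb R^{n\times n}$ be bounded and rd-continuous, and suppose the system $x^\Delta=A(t)x$ is regular on $\mathbb T$. Then for any real numbers $0<\lambda<\gamma$ there exist a constant $C_{\gamma,\lambda}>0$ and a linear operator $\mathcal L_\gamma:\mathcal C_\gamma\to\mathcal C_\lambda$ such that for every rd-continuous $f\in\mathcal C_\gamma$ the function $\mathcal L_\gamma f$ is a solution of $x^\Delta=A(t)x+f(t)$ on $\mathbb T$, and $\|\mathcal L_\gamma f\|_\lambda\le C_{\gamma,\lambda}\|f\|_\gamma$.
   Context: A time scale $\mathbb T$ is a nonempty closed subset of $\mathbb R$; $\sigma(t)=\inf\{s\in\mathbb T:s>t\}$, $\mu(t)=\sigma(t)-t$ (graininess). $\mathbb T$ is syndetic if $\sup_{t\in\mathbb T}\mu(t)<+\infty$. rd-continuous: continuous at right-dense points ($\mu(t)=0$), with finite left limits at left-dense points. $x^\Delta$ is the Hilger $\Delta$-derivative. For $\kappa\in\mathbb R$, $\mathcal C_\kappa$ is the space of functions $f:\mathbb T\to\mathbb R^n$ with $\|f\|_\kappa:=\sup_{t\in\mathbb T}|f(t)|e^{\kappa t}<\infty$. For a matrix function $F$ on $\mathbb T$, $\Upsilon(F)=\limsup_{t\to\infty,\,t\in\mathbb T}\frac1t\ln\|F(t)\|$. Regularity: $x^\Delta=A(t)x$ is regular if there exist a constant real diagonal matrix $B=\mathrm{diag}(b_1,\dots,b_n)$ and a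 piecewise continuous, invertible-valued matrix function $L(t)$ on $\mathbb T$ with $\Upsilon(L)=\Upsilon(L^{-1})=0$ such that the substitution $x=L(t)y$ transforms the system into $y^\Delta=\hat B(t)y$, where $\hat B(t)=B$ if $\mu(t)=0$ and $\hat B(t)=(\exp(B\mu(t))-E)/\mu(t)$ if $\mu(t)>0$ ($E$ the identity matrix). *)

theory Defs
  imports "HOL-Analysis.Analysis" "HOL-Library.Liminf_Limsup"
begin

definition time_scale :: "real set \<Rightarrow> bool" where
  "time_scale T \<longleftrightarrow> T \<noteq> {} \<and> closed T"

definition sigma :: "real set \<Rightarrow> real \<Rightarrow> real" where
  "sigma T t = (if \<exists>s\<in>T. t < s then Inf {s\<in>T. t < s} else t)"

definition rho :: "real set \<Rightarrow> real \<Rightarrow> real" where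
  "rho T t = (if \<exists>s\<in>T. s < t then Sup {s\<in>T. s < t} else t)"

definition graininess :: "real set \<Rightarrow> real \<Rightarrow> real" where
  "graininess T t = sigma T t - t"

definition syndetic :: "real set \<Rightarrow> bool" where
  "syndetic T \<longleftrightarrow> bdd_above (graininess T ` T)"

definition right_dense :: "real set \<Rightarrow> real \<Rightarrow> bool" where
  "right_dense T t \<longleftrightarrow> graininess T t = 0"

definition left_dense :: "real set \<Rightarrow> real \<Rightarrow> bool" where
  "left_dense T t \<longleftrightarrow> (\<exists>s\<in>T. s < t) \<and> rho T t = t"

definition rd_continuous :: "real set \<Rightarrow> (real \<Rightarrow> 'a::topological_space) \<Rightarrow> bool" where
  "rd_continuous T f \<longleftrightarrow>
     (\<forall>t\<in>T. right_dense T t \<longrightarrow> continuous (at t within T) f) \<and>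
     (\<forall>t\<in>T. left_dense T t \<longrightarrow> (\<exists>l. (f \<longlongrightarrow> l) (at t within (T \<inter> {..<t}))))"

definition piecewise_continuous :: "real set \<Rightarrow> (real \<Rightarrow> 'a::topological_space) \<Rightarrow> bool" where
  "piecewise_continuous T f \<longleftrightarrow>
     (\<forall>a. finite {t\<in>T. t \<le> a \<and> \<not> continuous (at t within T) f}) \<and>
     (\<forall>t\<in>T. left_dense T t \<longrightarrow> (\<exists>l. (f \<longlongrightarrow> l) (at t within (T \<inter> {..<t})))) \<and>
     (\<forall>t\<in>T. right_dense T t \<longrightarrow> (\<exists>l. (f \<longlongrightarrow> l) (at t within (T \<inter> {t<..}))))"

definition has_delta_derivative ::
  "real set \<Rightarrow> (real \<Rightarrow> 'a::real_normed_vector) \<Rightarrow> 'a \<Rightarrow> real \<Rightarrow> bool" where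
  "has_delta_derivative T x D t \<longleftrightarrow>
     (\<forall>\<epsilon>>0. \<exists>\<delta>>0. \<forall>s\<in>T. \<bar>s - t\<bar> < \<delta> \<longrightarrow>
        norm (x (sigma T t) - x s - (sigma T t - s) *\<^sub>R D) \<le> \<epsilon> * \<bar>sigma T t - s\<bar>)"

text \<open>x is a solution of x^Delta = A(t) x + f(t) on T (T has no maximum here, so T^kappa = T).\<close>
definition solves_linear ::
  "real set \<Rightarrow> (real \<Rightarrow> real^'n^'n) \<Rightarrow> (real \<Rightarrow> real^'n) \<Rightarrow> (real \<Rightarrow> real^'n) \<Rightarrow> bool" where
  "solves_linear T A f x \<longleftrightarrow>
     (\<forall>t\<in>T. has_delta_derivative T x (A t *v x t + f t) t)"

definition weighted_norm :: "real set \<Rightarrow> real \<Rightarrow> (real \<Rightarrow> real^'n) \<Rightarrow> real" where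
  "weighted_norm T \<kappa> f = (SUP t\<in>T. norm (f t) * exp (\<kappa> * t))"

definition in_C :: "real set \<Rightarrow> real \<Rightarrow> (real \<Rightarrow> real^'n) \<Rightarrow> bool" where
  "in_C T \<kappa> f \<longleftrightarrow> bdd_above ((\<lambda>t. norm (f t) * exp (\<kappa> * t)) ` T)"

definition Upsilon :: "real set \<Rightarrow> (real \<Rightarrow> real^'n^'m) \<Rightarrow> ereal" where
  "Upsilon T F = Limsup (inf at_top (principal T)) (\<lambda>t. ereal (ln (norm (F t)) / t))"

text \<open>B-hat(t) for B = diag(b): B if mu(t)=0, (exp(B mu(t)) - E)/mu(t) otherwise
  (entrywise, since B is diagonal).\<close>
definition Bhat :: "real set \<Rightarrow> real^'n \<Rightarrow> real \<Rightarrow> real^'n^'n" where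
  "Bhat T b t = (\<chi> i j. if i = j then
       (if graininess T t = 0 then b $ i
        else (exp (b $ i * graininess T t) - 1) / graininess T t)
     else 0)"

definition regular_system :: "real set \<Rightarrow> (real \<Rightarrow> real^'n^'n) \<Rightarrow> bool" where
  "regular_system T A \<longleftrightarrow>
     (\<exists>(b::real^'n) (L::real \<Rightarrow> real^'n^'n).
        (\<forall>t\<in>T. invertible (L t)) \<and>
        piecewise_continuous T L \<and>
        Upsilon T L = 0 \<and> Upsilon T (\<lambda>t. matrix_inv (L t)) = 0 \<and>
        (\<forall>y. solves_linear T (Bhat T b) (\<lambda>_. 0) y \<longleftrightarrow>
             solves_linear T A (\<lambda>_. 0) (\<lambda>t. L t *v y t)))"

end

theory Submission
  imports Defs "HOL-Library.Function_Algebras"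
begin

text \<open>
  Regularity supplies a transformation \<open>L\<close> with \<open>\<Upsilon>(L) = \<Upsilon>(L\<^sup>-\<^sup>1) = 0\<close> such that the columns
  \<open>\<phi>\<^sub>i(t) = L(t) exp(b\<^sub>i t) e\<^sub>i\<close> form a fundamental system of \<open>x\<^sup>\<Delta> = A(t) x\<close>; hence
  \<open>|L(t)|, |L(t)\<^sup>-\<^sup>1| \<le> K exp(\<epsilon> t)\<close> for every \<open>\<epsilon> > 0\<close>. By variation of constants,
  \<open>x = \<Sum>\<^sub>i z\<^sub>i \<phi>\<^sub>i\<close> solves \<open>x\<^sup>\<Delta> = A(t) x + f(t)\<close> as soon as
  \<open>z\<^sub>i\<^sup>\<Delta>(t) = exp(-b\<^sub>i \<sigma>(t)) (L(\<sigma>(t))\<^sup>-\<^sup>1 f(t))\<^sub>i\<close>, which is \<open>O(exp(-\<kappa>\<^sub>i t))\<close> with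
  \<open>\<kappa>\<^sub>i = \<gamma> + b\<^sub>i - \<epsilon>\<close>. Integrating \<open>z\<^sub>i\<^sup>\<Delta>\<close> from infinity when \<open>\<kappa>\<^sub>i > 0\<close> and from \<open>0\<close>
  otherwise makes every term \<open>z\<^sub>i \<phi>\<^sub>i\<close> of order \<open>exp(-\<lambda> t)\<close> once \<open>\<epsilon> = (\<gamma> - \<lambda>)/3\<close>.
  \<open>\<Delta>\<close>-integrals are Lebesgue integrals of the step function \<open>u \<mapsto> h(max {s \<in> T. s \<le> u})\<close>.
  The resulting operator is linear on the rd-continuous right-hand sides only; a Hamel basis
  extends it linearly to all of \<open>\<C>\<^sub>\<gamma>\<close>.
\<close>

lemma countable_separated_by_intervals:
  fixes S :: "real set" and l r :: "real \<Rightarrow> real"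
  assumes nonempty: "\<And>x. x \<in> S \<Longrightarrow> l x < r x"
    and separated: "\<And>x y. x \<in> S \<Longrightarrow> y \<in> S \<Longrightarrow> x < y \<Longrightarrow> r x \<le> l y"
  shows "countable S"
proof -
  let ?I = "\<lambda>x. {l x<..<r x}"
  have disj: "disjnt (?I x) (?I y)" if "x \<in> S" "y \<in> S" "x \<noteq> y" for x y
  proof -
    have "r x \<le> l y \<or> r y \<le> l x"
      using that separated[of x y] separated[of y x] by (cases "x < y") auto
    then show ?thesis by (auto simp: disjnt_def)
  qed
  have "pairwise disjnt (?I ` S)"
  proof (rule pairwiseI)
    fix A B assume "A \<in> ?I ` S" "B \<in> ?I ` S" "A \<noteq> B"
    then obtain x y where "x \<in> S" "y \<in> S" "x \<noteq> y" "A = ?I x" "B = ?I y" by blast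
    then show "disjnt A B" using disj by simp
  qed
  then have "countable (?I ` S)" by (intro countable_disjoint_open_subsets) auto
  moreover have "inj_on ?I S"
  proof (rule inj_onI)
    fix x y assume xy: "x \<in> S" "y \<in> S" "?I x = ?I y"
    moreover have "?I x \<noteq> {}" using nonempty[OF xy(1)] by simp
    ultimately show "x = y" using disj[of x y] by (auto simp: disjnt_def)
  qed
  ultimately show ?thesis by (rule countable_image_inj_on)
qed

lemma isCont_if_locally_constant:
  assumes "open S" "u \<in> S" "\<And>v. v \<in> S \<Longrightarrow> f v = f u"
  shows "isCont f u"
proof -
  have "continuous_on S f" using continuous_on_cong[of S S f "\<lambda>_. f u"] assms(3) by simp
  then show ?thesis using continuous_on_eq_continuous_at[OF assms(1)] assms(2) by blast
qed

lemma integral_deviation_le: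
  fixes F :: "real \<Rightarrow> real"
  assumes "a \<le> b" "F integrable_on {a..b}" "\<And>v. v \<in> {a..b} \<Longrightarrow> \<bar>F v - c\<bar> \<le> e"
  shows "\<bar>integral {a..b} F - (b - a) * c\<bar> \<le> e * (b - a)"
proof -
  have e: "0 \<le> e" using assms(3)[of a] assms(1) by auto
  have "((\<lambda>v. F v - c) has_integral (integral {a..b} F - (b - a) * c)) {a..b}"
    using has_integral_diff[OF integrable_integral[OF assms(2)] has_integral_const_real[of c a b]]
      assms(1) by simp
  from has_integral_bound_real[OF e finite.emptyI this] assms show ?thesis by simp
qed

lemma linear_extension_into_subspace:
  fixes P :: "('a \<Rightarrow> 'b::real_vector) \<Rightarrow> 'c \<Rightarrow> 'd::real_vector"
  assumes W_zero: "(\<lambda>_. 0) \<in> W"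
    and W_lincomb: "\<And>f g a c. f \<in> W \<Longrightarrow> g \<in> W \<Longrightarrow> (\<lambda>s. a *\<^sub>R f s + c *\<^sub>R g s) \<in> W"
    and P_lincomb: "\<And>f g a c. f \<in> W \<Longrightarrow> g \<in> W \<Longrightarrow>
        P (\<lambda>s. a *\<^sub>R f s + c *\<^sub>R g s) = (\<lambda>s. a *\<^sub>R P f s + c *\<^sub>R P g s)"
    and V_zero: "(\<lambda>_. 0) \<in> V"
    and V_lincomb: "\<And>f g a c. f \<in> V \<Longrightarrow> g \<in> V \<Longrightarrow> (\<lambda>s. a *\<^sub>R f s + c *\<^sub>R g s) \<in> V"
    and P_into: "\<And>f. f \<in> W \<Longrightarrow> P f \<in> V"
  obtains Q where "\<And>f g a c. Q (\<lambda>s. a *\<^sub>R f s + c *\<^sub>R g s) = (\<lambda>s. a *\<^sub>R Q f s + c *\<^sub>R Q g s)"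
    and "\<And>f. f \<in> W \<Longrightarrow> Q f = P f" and "\<And>f. Q f \<in> V"
proof -
  interpret dom: vector_space "\<lambda>r (f :: 'a \<Rightarrow> 'b) s. r *\<^sub>R f s"
    by unfold_locales (auto simp: fun_eq_iff algebra_simps)
  interpret cod: vector_space "\<lambda>r (f :: 'c \<Rightarrow> 'd) s. r *\<^sub>R f s"
    by unfold_locales (auto simp: fun_eq_iff algebra_simps)
  interpret pair: vector_space_pair "\<lambda>r (f :: 'a \<Rightarrow> 'b) s. r *\<^sub>R f s" "\<lambda>r (f :: 'c \<Rightarrow> 'd) s. r *\<^sub>R f s" ..
  obtain B where B: "B \<subseteq> W" "dom.independent B" "W \<subseteq> dom.span B" "card B = dom.dim W"
    by (rule dom.basis_exists)
  let ?Q = "pair.construct B P"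
  have hom: "module_hom (\<lambda>r (f :: 'a \<Rightarrow> 'b) s. r *\<^sub>R f s) (\<lambda>r (f :: 'c \<Rightarrow> 'd) s. r *\<^sub>R f s) ?Q"
    using pair.linear_construct[OF B(2)] by (simp add: module_hom_iff_linear)
  have Q_lincomb: "?Q (\<lambda>s. a *\<^sub>R f s + c *\<^sub>R g s) = (\<lambda>s. a *\<^sub>R ?Q f s + c *\<^sub>R ?Q g s)" for f g a c
  proof -
    have "(\<lambda>s. a *\<^sub>R f s + c *\<^sub>R g s) = (\<lambda>s. a *\<^sub>R f s) + (\<lambda>s. c *\<^sub>R g s)" by (simp add: fun_eq_iff)
    then show ?thesis
      using module_hom.add[OF hom, of "\<lambda>s. a *\<^sub>R f s" "\<lambda>s. c *\<^sub>R g s"]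
        module_hom.scale[OF hom, of a f] module_hom.scale[OF hom, of c g]
      by (simp add: plus_fun_def)
  qed
  have "f \<in> W \<and> ?Q f = P f" if "f \<in> dom.span B" for f
    using that
  proof (induct rule: dom.span_induct_alt)
    case base
    have "(\<lambda>s. 0 *\<^sub>R (\<lambda>_. 0) s + 0 *\<^sub>R (\<lambda>_. 0) s) = (0 :: 'a \<Rightarrow> 'b)" by (simp add: fun_eq_iff)
    then show ?case
      using W_zero P_lincomb[OF W_zero W_zero, of 0 0] module_hom.zero[OF hom] by (simp add: zero_fun_def)
  next
    case (step c x y)
    have x: "x \<in> W" using step B by auto
    have eq: "(\<lambda>s. c *\<^sub>R x s) + y = (\<lambda>s. c *\<^sub>R x s + 1 *\<^sub>R y s)" by (simp add: fun_eq_iff)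
    show ?case
      unfolding eq using step x Q_lincomb[of c x 1 y] P_lincomb[OF x, of y c 1] W_lincomb[OF x, of y c 1]
        pair.construct_basis[OF B(2) step(1)] by simp
  qed
  moreover have "?Q f \<in> V" for f
  proof -
    have "cod.subspace V"
      unfolding cod.subspace_def using V_zero V_lincomb[of _ _ 1 1] V_lincomb[OF _ V_zero, of _ _ 0]
      by (auto simp: zero_fun_def plus_fun_def)
    then have "cod.span (P ` B) \<subseteq> V" using P_into B(1) by (intro cod.span_minimal) auto
    then show ?thesis using pair.construct_in_span[OF B(2)] by blast
  qed
  ultimately show ?thesis using that Q_lincomb B(3) by blast
qed

lemma norm_matrix_vector_mult_le:
  fixes A :: "real^'n^'m"
  shows "norm (A *v x) \<le> norm A * norm x"
proof -
  have "\<bar>(A *v x) $ i\<bar> \<le> norm x * norm (A $ i)" for i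
    using Cauchy_Schwarz_ineq2[of "A $ i" x]
    by (simp add: matrix_vector_mult_def inner_vec_def mult.commute)
  then have "norm (A *v x) \<le> L2_set (\<lambda>i. norm x * norm (A $ i)) UNIV"
    unfolding norm_vec_def by (intro L2_set_mono) auto
  also have "\<dots> = norm x * L2_set (\<lambda>i. norm (A $ i)) UNIV" by (simp add: L2_set_right_distrib)
  also have "\<dots> = norm A * norm x" by (simp add: norm_vec_def)
  finally show ?thesis .
qed

lemma matrix_inv_right: "invertible A \<Longrightarrow> A ** matrix_inv A = mat 1"
  unfolding invertible_def matrix_inv_def by (rule someI_ex[THEN conjunct1])

lemma matrix_inv_left: "invertible A \<Longrightarrow> matrix_inv A ** A = mat 1"
  unfolding invertible_def matrix_inv_def by (rule someI_ex[THEN conjunct2])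

lemma invertible_nonzero:
  fixes A :: "real^'n^'n"
  shows "invertible A \<Longrightarrow> A \<noteq> 0" and "invertible A \<Longrightarrow> matrix_inv A \<noteq> 0"
proof -
  have "(mat 1 :: real^'n^'n) \<noteq> 0"
  proof
    assume "(mat 1 :: real^'n^'n) = 0"
    then have "(mat 1 :: real^'n^'n) $ i $ i = 0" for i by simp
    then show False by (simp add: mat_def)
  qed
  then show "invertible A \<Longrightarrow> A \<noteq> 0" and "invertible A \<Longrightarrow> matrix_inv A \<noteq> 0"
    using matrix_inv_right[of A] matrix_inv_left[of A] by auto
qed

lemma matrix_inv_nth:
  fixes A :: "real^'n^'n"
  assumes "invertible A"
  shows "matrix_inv A $ k $ j = det (\<chi> r c. if c = k then axis j 1 $ r else A $ r $ c) / det A"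
proof -
  have "A *v (matrix_inv A *v axis j 1) = axis j 1"
    by (simp add: matrix_vector_mul_assoc matrix_inv_right[OF assms])
  then have "matrix_inv A *v axis j 1 = (\<chi> k. det (\<chi> r c. if c = k then axis j 1 $ r else A $ r $ c) / det A)"
    using cramer[OF invertible_det_nz[THEN iffD1, OF assms]] by blast
  then show ?thesis by (simp add: matrix_vector_mult_basis column_def vec_eq_iff)
qed

lemma continuous_matrixI:
  fixes X :: "'a::t2_space \<Rightarrow> real^'n^'m"
  assumes "\<And>i j. continuous F (\<lambda>s. X s $ i $ j)"
  shows "continuous F X"
proof -
  have "((\<lambda>s. \<chi> i j. X s $ i $ j) \<longlongrightarrow> (\<chi> i j. X (netlimit F) $ i $ j)) F"
    using assms unfolding continuous_def by (intro tendsto_vec_lambda)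
  then show ?thesis by (simp add: continuous_def vec_lambda_eta)
qed

lemma continuous_det:
  fixes X :: "'a::t2_space \<Rightarrow> real^'n^'n"
  assumes "\<And>i j. continuous F (\<lambda>s. X s $ i $ j)"
  shows "continuous F (\<lambda>s. det (X s))"
  unfolding det_def by (intro continuous_sum continuous_mult continuous_const continuous_prod assms)

lemma continuous_within_matrix_inv:
  fixes L :: "real \<Rightarrow> real^'n^'n"
  assumes cont: "\<And>i j. continuous (at t within S) (\<lambda>s. L s $ i $ j)"
    and inv: "\<And>s. s \<in> S \<Longrightarrow> invertible (L s)" and t: "t \<in> S"
  shows "continuous (at t within S) (\<lambda>s. matrix_inv (L s))"
proof (rule continuous_matrixI)
  fix k j
  let ?N = "\<lambda>s. det (\<chi> r c. if c = k then axis j 1 $ r else L s $ r $ c)"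
  have "continuous (at t within S) ?N"
  proof (rule continuous_det)
    fix r c
    show "continuous (at t within S) (\<lambda>s. (\<chi> r c. if c = k then axis j 1 $ r else L s $ r $ c) $ r $ c)"
      by (cases "c = k") (simp_all add: cont)
  qed
  moreover have "continuous (at t within S) (\<lambda>s. det (L s))" by (rule continuous_det[OF cont])
  ultimately have "((\<lambda>s. ?N s / det (L s)) \<longlongrightarrow> ?N t / det (L t)) (at t within S)"
    using invertible_det_nz[THEN iffD1, OF inv[OF t]] unfolding continuous_within
    by (intro tendsto_divide)
  moreover have "\<forall>\<^sub>F s in at t within S. ?N s / det (L s) = matrix_inv (L s) $ k $ j"
    unfolding eventually_at_filter using matrix_inv_nth[OF inv] by auto
  ultimately show "continuous (at t within S) (\<lambda>s. matrix_inv (L s) $ k $ j)"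
    unfolding continuous_within using matrix_inv_nth[OF inv[OF t]]
    by (auto intro: Lim_transform_eventually)
qed

lemma weighted_norm_ge:
  assumes "in_C T k f" "t \<in> T"
  shows "norm (f t) * exp (k * t) \<le> weighted_norm T k f"
  unfolding weighted_norm_def using assms by (intro cSUP_upper) (auto simp: in_C_def)

lemma norm_le_weighted_norm:
  assumes "in_C T k f" "t \<in> T"
  shows "norm (f t) \<le> weighted_norm T k f * exp (- k * t)"
  using mult_right_mono[OF weighted_norm_ge[OF assms], of "exp (- k * t)"]
  by (simp add: mult.assoc exp_add[symmetric])

lemma weighted_norm_nonneg: "in_C T k f \<Longrightarrow> t \<in> T \<Longrightarrow> 0 \<le> weighted_norm T k f"
  using weighted_norm_ge[of T k f t] by (smt (verit) exp_ge_zero mult_nonneg_nonneg norm_ge_zero)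

lemma weighted_norm_le:
  "T \<noteq> {} \<Longrightarrow> (\<And>t. t \<in> T \<Longrightarrow> norm (f t) * exp (k * t) \<le> X) \<Longrightarrow> weighted_norm T k f \<le> X"
  unfolding weighted_norm_def by (rule cSUP_least)

lemma in_C_cong: "(\<And>t. t \<in> T \<Longrightarrow> f t = g t) \<Longrightarrow> in_C T k f \<longleftrightarrow> in_C T k g"
  unfolding in_C_def by (intro arg_cong[where f = bdd_above] image_cong) auto

lemma in_C_lincomb:
  assumes "in_C T k f" "in_C T k g"
  shows "in_C T k (\<lambda>s. a *\<^sub>R f s + c *\<^sub>R g s)"
proof -
  obtain Bf Bg where Bf: "\<And>t. t \<in> T \<Longrightarrow> norm (f t) * exp (k * t) \<le> Bf"
    and Bg: "\<And>t. t \<in> T \<Longrightarrow> norm (g t) * exp (k * t) \<le> Bg"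
    using assms unfolding in_C_def bdd_above_def by auto
  show ?thesis unfolding in_C_def
  proof (rule bdd_aboveI2)
    fix t assume t: "t \<in> T"
    have "norm (a *\<^sub>R f t + c *\<^sub>R g t) * exp (k * t)
        \<le> \<bar>a\<bar> * (norm (f t) * exp (k * t)) + \<bar>c\<bar> * (norm (g t) * exp (k * t))"
      using mult_right_mono[OF norm_triangle_ineq[of "a *\<^sub>R f t" "c *\<^sub>R g t"], of "exp (k * t)"]
      by (simp add: algebra_simps)
    also have "\<dots> \<le> \<bar>a\<bar> * Bf + \<bar>c\<bar> * Bg"
      using Bf[OF t] Bg[OF t] by (intro add_mono mult_left_mono) auto
    finally show "norm (a *\<^sub>R f t + c *\<^sub>R g t) * exp (k * t) \<le> \<bar>a\<bar> * Bf + \<bar>c\<bar> * Bg" .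
  qed
qed

section \<open>Calculus on a syndetic time scale\<close>

definition exp_delta_rate :: "real set \<Rightarrow> real \<Rightarrow> real \<Rightarrow> real" where
  "exp_delta_rate T \<beta> t =
     (if graininess T t = 0 then \<beta> else (exp (\<beta> * graininess T t) - 1) / graininess T t)"

locale syndetic_time_scale =
  fixes T :: "real set" and M :: real
  assumes closed_T: "closed T" and T_nonneg: "\<And>t. t \<in> T \<Longrightarrow> 0 \<le> t" and zero_in_T: "0 \<in> T"
    and T_unbounded: "\<not> bdd_above T" and graininess_le: "\<And>t. t \<in> T \<Longrightarrow> graininess T t \<le> M"
begin

abbreviation \<sigma> :: "real \<Rightarrow> real" where "\<sigma> \<equiv> sigma T"

lemma ex_greater: "\<exists>s\<in>T. t < s"
  using T_unbounded by (meson bdd_above.I linorder_not_le)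

lemma greater_points: "{s\<in>T. t < s} \<noteq> {}" "bdd_below {s\<in>T. t < s}"
  using ex_greater by (auto intro: bdd_belowI[of _ t])

lemma sigma_eq_Inf: "\<sigma> t = Inf {s\<in>T. t < s}"
  using ex_greater by (simp add: sigma_def)

lemma sigma_in: "\<sigma> t \<in> T"
proof -
  have "Inf {s\<in>T. t < s} \<in> closure {s\<in>T. t < s}"
    using greater_points by (rule closure_contains_Inf)
  also have "\<dots> \<subseteq> T" using closed_T by (simp add: closure_minimal)
  finally show ?thesis by (simp add: sigma_eq_Inf)
qed

lemma sigma_ge: "t \<le> \<sigma> t"
  unfolding sigma_eq_Inf using greater_points by (intro cInf_greatest) auto

lemma sigma_le: "s \<in> T \<Longrightarrow> t < s \<Longrightarrow> \<sigma> t \<le> s"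
  unfolding sigma_eq_Inf using greater_points by (intro cInf_lower) auto

lemma sigma_le_add: "t \<in> T \<Longrightarrow> \<sigma> t \<le> t + M"
  using graininess_le[of t] by (simp add: graininess_def)

lemma graininess_bound_nonneg: "0 \<le> M"
  using graininess_le[OF zero_in_T] sigma_ge[of 0] by (simp add: graininess_def)

lemma right_dense_approx:
  assumes "\<sigma> t = t" "0 < e"
  shows "\<exists>s\<in>T. t < s \<and> s < t + e"
proof -
  have "Inf {s\<in>T. t < s} < t + e" using assms sigma_eq_Inf by simp
  then show ?thesis using cInf_less_iff[OF greater_points] by auto
qed

definition continuous_right_dense :: "(real \<Rightarrow> 'a::topological_space) \<Rightarrow> bool" where
  "continuous_right_dense f \<longleftrightarrow> (\<forall>t\<in>T. \<sigma> t = t \<longrightarrow> continuous (at t within T) f)"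

lemma continuous_right_dense_cong:
  assumes "\<And>t. t \<in> T \<Longrightarrow> f t = g t"
  shows "continuous_right_dense f \<longleftrightarrow> continuous_right_dense g"
proof -
  have "(f \<longlongrightarrow> l) (at t within T) \<longleftrightarrow> (g \<longlongrightarrow> l) (at t within T)" for t l
    by (rule Lim_cong_within) (auto simp: assms)
  then show ?thesis unfolding continuous_right_dense_def continuous_within using assms by auto
qed

lemma continuous_right_dense_lincomb:
  fixes f g :: "real \<Rightarrow> 'a::real_normed_vector"
  shows "continuous_right_dense f \<Longrightarrow> continuous_right_dense g \<Longrightarrow>
    continuous_right_dense (\<lambda>s. a *\<^sub>R f s + c *\<^sub>R g s)"
  unfolding continuous_right_dense_def by (auto intro!: continuous_intros)

lemma continuous_right_dense_if_rd_continuous: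
  "rd_continuous T f \<Longrightarrow> continuous_right_dense f"
  by (simp add: rd_continuous_def continuous_right_dense_def right_dense_def graininess_def)

text \<open>For \<open>u < 0\<close> the set is empty and the value is junk.\<close>

definition ts_floor :: "real \<Rightarrow> real" where
  "ts_floor u = Sup {s\<in>T. s \<le> u}"

lemma lower_points: "0 \<le> u \<Longrightarrow> {s\<in>T. s \<le> u} \<noteq> {}" "bdd_above {s\<in>T. s \<le> u}"
  using zero_in_T by (auto intro: bdd_aboveI[of _ u])

lemma ts_floor_in: "0 \<le> u \<Longrightarrow> ts_floor u \<in> T"
proof -
  assume "0 \<le> u"
  then have "Sup {s\<in>T. s \<le> u} \<in> closure {s\<in>T. s \<le> u}"
    using lower_points by (intro closure_contains_Sup)
  also have "\<dots> \<subseteq> T" using closed_T by (simp add: closure_minimal)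
  finally show ?thesis by (simp add: ts_floor_def)
qed

lemma ts_floor_le: "0 \<le> u \<Longrightarrow> ts_floor u \<le> u"
  unfolding ts_floor_def using lower_points[of u] by (intro cSup_least) auto

lemma le_ts_floor: "s \<in> T \<Longrightarrow> s \<le> u \<Longrightarrow> s \<le> ts_floor u"
  unfolding ts_floor_def using lower_points[of u] T_nonneg[of s] by (intro cSup_upper) auto

lemma ts_floor_eq: "u \<in> T \<Longrightarrow> ts_floor u = u"
  using ts_floor_le le_ts_floor T_nonneg by (meson order.antisym order_refl)

lemma ts_floor_eqI:
  assumes "t \<in> T" "t \<le> u" "u < \<sigma> t"
  shows "ts_floor u = t"
proof -
  have u: "0 \<le> u" using assms T_nonneg by force
  have "t \<le> ts_floor u" using le_ts_floor assms by blast
  moreover have "\<not> t < ts_floor u"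
    using sigma_le[OF ts_floor_in[OF u]] ts_floor_le[OF u] assms(3) by force
  ultimately show ?thesis by simp
qed

lemma less_sigma_ts_floor:
  assumes u: "0 \<le> u" "u \<notin> T"
  shows "u < \<sigma> (ts_floor u)"
proof -
  let ?t = "ts_floor u"
  have t: "?t \<in> T" using ts_floor_in[OF u(1)] .
  then have "?t \<noteq> u" using u(2) by auto
  with ts_floor_le[OF u(1)] have "?t < u" by simp
  have "\<sigma> ?t \<noteq> ?t"
  proof
    assume "\<sigma> ?t = ?t"
    then obtain s where "s \<in> T" "?t < s" "s < u" using right_dense_approx[of ?t "u - ?t"] \<open>?t < u\<close> by auto
    then show False using le_ts_floor[of s u] by simp
  qed
  then have "?t < \<sigma> ?t" using sigma_ge[of ?t] by simp
  then show ?thesis using le_ts_floor[OF sigma_in, of ?t u] by linarith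
qed

lemma ts_floor_ge: "0 \<le> u \<Longrightarrow> u - M \<le> ts_floor u"
  using less_sigma_ts_floor sigma_le_add[OF ts_floor_in] ts_floor_eq graininess_bound_nonneg
  by (cases "u \<in> T") force+

lemma delta_deriv_sigma:
  assumes "has_delta_derivative T x D t" "t \<in> T"
  shows "x (\<sigma> t) - x t = (\<sigma> t - t) *\<^sub>R D"
proof -
  let ?r = "norm (x (\<sigma> t) - x t - (\<sigma> t - t) *\<^sub>R D)"
  have "?r \<le> 0 + e" if e: "0 < e" for e
  proof -
    have "0 < e / (\<sigma> t - t + 1)" using e sigma_ge[of t] by simp
    then have "?r \<le> e / (\<sigma> t - t + 1) * (\<sigma> t - t)"
      using assms sigma_ge[of t] unfolding has_delta_derivative_def by force
    also have "\<dots> \<le> e" using e sigma_ge[of t] by (simp add: field_simps)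
    finally show ?thesis by simp
  qed
  then have "?r \<le> 0" by (rule field_le_epsilon)
  then show ?thesis by simp
qed

lemma delta_deriv_continuous:
  assumes "has_delta_derivative T x D t" "t \<in> T"
  shows "continuous (at t within T) x"
  unfolding continuous_within_eps_delta
proof (intro allI impI)
  fix e :: real assume e: "0 < e"
  define \<mu> where "\<mu> = \<sigma> t - t"
  have \<mu>: "0 \<le> \<mu>" using sigma_ge[of t] by (simp add: \<mu>_def)
  define \<epsilon> where "\<epsilon> = e / (2 * (\<mu> + 1))"
  have \<epsilon>: "0 < \<epsilon>" "\<epsilon> * \<mu> < e / 2" using e \<mu> by (simp_all add: \<epsilon>_def field_simps)
  obtain d where d: "0 < d" "\<forall>s\<in>T. \<bar>s - t\<bar> < d \<longrightarrow>
      norm (x (\<sigma> t) - x s - (\<sigma> t - s) *\<^sub>R D) \<le> \<epsilon> * \<bar>\<sigma> t - s\<bar>"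
    using assms(1) \<epsilon> unfolding has_delta_derivative_def by blast
  define c where "c = \<epsilon> + norm D + 1"
  have c: "0 < c" "\<epsilon> + norm D \<le> c" using \<epsilon> by (simp_all add: c_def add_pos_nonneg)
  show "\<exists>d>0. \<forall>s\<in>T. dist s t < d \<longrightarrow> dist (x s) (x t) < e"
  proof (intro exI[of _ "min d (e / (2 * c))"] conjI ballI impI)
    show "0 < min d (e / (2 * c))" using d e c by simp
    fix s assume s: "s \<in> T" "dist s t < min d (e / (2 * c))"
    then have st: "\<bar>s - t\<bar> < d" "\<bar>s - t\<bar> * c < e / 2" using c by (auto simp: dist_real_def field_simps)
    let ?E = "x (\<sigma> t) - x s - (\<sigma> t - s) *\<^sub>R D"
    have "x s - x t = (s - t) *\<^sub>R D - ?E"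
      using delta_deriv_sigma[OF assms] by (simp add: algebra_simps)
    then have "norm (x s - x t) \<le> \<bar>s - t\<bar> * norm D + norm ?E"
      by (metis norm_scaleR norm_triangle_ineq4)
    moreover have "norm ?E \<le> \<epsilon> * (\<mu> + \<bar>s - t\<bar>)"
    proof -
      have "norm ?E \<le> \<epsilon> * \<bar>\<sigma> t - s\<bar>" using d(2) s(1) st(1) by blast
      also have "\<dots> \<le> \<epsilon> * (\<mu> + \<bar>s - t\<bar>)" using \<epsilon> sigma_ge[of t]
        by (intro mult_left_mono) (auto simp: \<mu>_def)
      finally show ?thesis .
    qed
    ultimately have "norm (x s - x t) \<le> \<bar>s - t\<bar> * norm D + \<epsilon> * (\<mu> + \<bar>s - t\<bar>)" by linarith
    also have "\<dots> = \<epsilon> * \<mu> + \<bar>s - t\<bar> * (\<epsilon> + norm D)" by (simp add: algebra_simps)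
    also have "\<dots> < e / 2 + e / 2"
      using \<epsilon>(2) st(2) c(2) mult_left_mono[OF c(2), of "\<bar>s - t\<bar>"] by linarith
    finally show "dist (x s) (x t) < e" by (simp add: dist_norm)
  qed
qed

lemma delta_deriv_right_dense_iff:
  assumes "\<sigma> t = t"
  shows "has_delta_derivative T x D t \<longleftrightarrow> (x has_vector_derivative D) (at t within T)"
proof -
  have "x t - x s - (t - s) *\<^sub>R D = - (x s - x t - (s - t) *\<^sub>R D)" for s
    by (simp add: algebra_simps)
  then have "norm (x t - x s - (t - s) *\<^sub>R D) = norm (x s - x t - (s - t) *\<^sub>R D)" for s
    by (metis norm_minus_cancel)
  then show ?thesis
    unfolding has_delta_derivative_def has_vector_derivative_def has_derivative_within_alt
    using assms by (simp add: bounded_linear_scaleR_left abs_minus_commute)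
qed

lemma delta_deriv_right_scatteredI:
  assumes cont: "continuous (at t within T) x" and rs: "t < \<sigma> t" and t: "t \<in> T"
    and step: "x (\<sigma> t) - x t = (\<sigma> t - t) *\<^sub>R D"
  shows "has_delta_derivative T x D t"
  unfolding has_delta_derivative_def
proof (intro allI impI)
  fix e :: real assume e: "0 < e"
  have "((\<lambda>s. norm (x t - x s - (t - s) *\<^sub>R D)) \<longlongrightarrow> norm (x t - x t - (t - t) *\<^sub>R D)) (at t within T)"
    using cont unfolding continuous_within by (intro tendsto_intros)
  then have "\<forall>\<^sub>F s in at t within T. norm (x t - x s - (t - s) *\<^sub>R D) < e * (\<sigma> t - t)"
    using e rs by (intro order_tendstoD) auto
  moreover have "\<forall>\<^sub>F s in at t within T. s < \<sigma> t"
    by (rule order_tendstoD(2)[OF tendsto_ident_at rs])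
  ultimately have "\<forall>\<^sub>F s in at t within T. norm (x t - x s - (t - s) *\<^sub>R D) < e * (\<sigma> t - t) \<and> s < \<sigma> t"
    by (rule eventually_conj)
  then obtain d where d: "0 < d" "\<And>s. s \<in> T \<Longrightarrow> s \<noteq> t \<Longrightarrow> dist s t < d \<Longrightarrow>
      norm (x t - x s - (t - s) *\<^sub>R D) < e * (\<sigma> t - t) \<and> s < \<sigma> t"
    unfolding eventually_at by blast
  show "\<exists>d>0. \<forall>s\<in>T. \<bar>s - t\<bar> < d \<longrightarrow> norm (x (\<sigma> t) - x s - (\<sigma> t - s) *\<^sub>R D) \<le> e * \<bar>\<sigma> t - s\<bar>"
  proof (intro exI[of _ d] conjI ballI impI d(1))
    fix s assume s: "s \<in> T" "\<bar>s - t\<bar> < d"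
    have eq: "x (\<sigma> t) - x s - (\<sigma> t - s) *\<^sub>R D = x t - x s - (t - s) *\<^sub>R D"
      using step by (simp add: algebra_simps)
    show "norm (x (\<sigma> t) - x s - (\<sigma> t - s) *\<^sub>R D) \<le> e * \<bar>\<sigma> t - s\<bar>"
    proof (cases "s = t")
      case False
      with d(2)[OF s(1)] s(2) have "norm (x t - x s - (t - s) *\<^sub>R D) < e * (\<sigma> t - t)" "s < \<sigma> t"
        by (auto simp: dist_real_def)
      moreover have "s \<le> t" using sigma_le[OF s(1), of t] \<open>s < \<sigma> t\<close> by linarith
      then have "\<sigma> t - t \<le> \<bar>\<sigma> t - s\<bar>" by simp
      with calculation(1) e show ?thesis unfolding eq
        by (smt (verit) mult_left_mono)
    qed (use step e in simp)
  qed
qed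

lemma delta_deriv_cong:
  assumes "\<And>s. s \<in> T \<Longrightarrow> x s = y s" "t \<in> T"
  shows "has_delta_derivative T x D t \<longleftrightarrow> has_delta_derivative T y D t"
  unfolding has_delta_derivative_def using assms sigma_in[of t] by auto

lemma delta_deriv_const: "has_delta_derivative T (\<lambda>_. c) 0 t"
  by (simp add: has_delta_derivative_def)

lemma delta_deriv_sum:
  assumes "finite I" "\<And>i. i \<in> I \<Longrightarrow> has_delta_derivative T (f i) (D i) t" and t: "t \<in> T"
  shows "has_delta_derivative T (\<lambda>s. \<Sum>i\<in>I. f i s) (\<Sum>i\<in>I. D i) t"
proof (cases "\<sigma> t = t")
  case True
  then show ?thesis
    using assms by (simp add: delta_deriv_right_dense_iff has_vector_derivative_sum)
next
  case False
  then have "t < \<sigma> t" using sigma_ge[of t] by simp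
  moreover have "continuous (at t within T) (\<lambda>s. \<Sum>i\<in>I. f i s)"
    using assms delta_deriv_continuous by (intro continuous_sum) auto
  moreover have "(\<Sum>i\<in>I. f i (\<sigma> t)) - (\<Sum>i\<in>I. f i t) = (\<sigma> t - t) *\<^sub>R (\<Sum>i\<in>I. D i)"
    unfolding sum_subtractf[symmetric] scaleR_sum_right
    using assms(2) delta_deriv_sigma[OF _ t] by (intro sum.cong) auto
  ultimately show ?thesis using t by (intro delta_deriv_right_scatteredI)
qed

lemma delta_deriv_scaleR:
  assumes z: "has_delta_derivative T z z' t" and \<phi>: "has_delta_derivative T \<phi> \<phi>' t" and t: "t \<in> T"
  shows "has_delta_derivative T (\<lambda>s. z s *\<^sub>R \<phi> s) (z' *\<^sub>R \<phi> (\<sigma> t) + z t *\<^sub>R \<phi>') t"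
proof (cases "\<sigma> t = t")
  case True
  then have "(z has_real_derivative z') (at t within T)" "(\<phi> has_vector_derivative \<phi>') (at t within T)"
    using z \<phi> by (simp_all add: delta_deriv_right_dense_iff has_real_derivative_iff_has_vector_derivative)
  from has_vector_derivative_scaleR[OF this] show ?thesis
    using True by (simp add: delta_deriv_right_dense_iff add.commute)
next
  case False
  then have "t < \<sigma> t" using sigma_ge[of t] by simp
  moreover have "continuous (at t within T) (\<lambda>s. z s *\<^sub>R \<phi> s)"
    using delta_deriv_continuous[OF z t] delta_deriv_continuous[OF \<phi> t] by (intro continuous_intros)
  moreover have "z (\<sigma> t) *\<^sub>R \<phi> (\<sigma> t) - z t *\<^sub>R \<phi> t
      = (z (\<sigma> t) - z t) *\<^sub>R \<phi> (\<sigma> t) + z t *\<^sub>R (\<phi> (\<sigma> t) - \<phi> t)"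
    by (simp add: algebra_simps)
  then have "z (\<sigma> t) *\<^sub>R \<phi> (\<sigma> t) - z t *\<^sub>R \<phi> t = (\<sigma> t - t) *\<^sub>R (z' *\<^sub>R \<phi> (\<sigma> t) + z t *\<^sub>R \<phi>')"
    using delta_deriv_sigma[OF z t] delta_deriv_sigma[OF \<phi> t] by (simp add: algebra_simps)
  ultimately show ?thesis using t by (intro delta_deriv_right_scatteredI)
qed

lemma delta_deriv_exp:
  assumes "t \<in> T"
  shows "has_delta_derivative T (\<lambda>t. exp (\<beta> * t)) (exp_delta_rate T \<beta> t * exp (\<beta> * t)) t"
proof (cases "\<sigma> t = t")
  case True
  have "((\<lambda>t. exp (\<beta> * t)) has_real_derivative (exp (\<beta> * t) * \<beta>)) (at t within T)"
    by (auto intro!: derivative_eq_intros)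
  then show ?thesis
    using True by (simp add: delta_deriv_right_dense_iff has_real_derivative_iff_has_vector_derivative
        exp_delta_rate_def graininess_def mult.commute)
next
  case False
  then have "t < \<sigma> t" using sigma_ge[of t] by simp
  moreover have "exp (\<beta> * \<sigma> t) - exp (\<beta> * t) = (\<sigma> t - t) *\<^sub>R (exp_delta_rate T \<beta> t * exp (\<beta> * t))"
  proof -
    have "exp (\<beta> * \<sigma> t) = exp (\<beta> * t) * exp (\<beta> * (\<sigma> t - t))"
      by (simp add: exp_add[symmetric] algebra_simps)
    then show ?thesis using False by (simp add: exp_delta_rate_def graininess_def field_simps)
  qed
  ultimately show ?thesis
    using assms by (intro delta_deriv_right_scatteredI continuous_intros)
qed

lemma sigma_continuous:
  assumes "t \<in> T" "\<sigma> t = t"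
  shows "continuous (at t within T) \<sigma>"
  unfolding continuous_within_eps_delta
proof (intro allI impI)
  fix e :: real assume e: "0 < e"
  obtain u where u: "u \<in> T" "t < u" "u < t + e" using right_dense_approx[OF assms(2) e] by blast
  show "\<exists>d>0. \<forall>s\<in>T. dist s t < d \<longrightarrow> dist (\<sigma> s) (\<sigma> t) < e"
  proof (intro exI[of _ "u - t"] conjI ballI impI)
    fix s assume s: "s \<in> T" "dist s t < u - t"
    have "\<sigma> s \<le> (if s < t then t else u)"
      using s u sigma_le[OF assms(1), of s] sigma_le[OF u(1), of s] by (auto simp: dist_real_def)
    then show "dist (\<sigma> s) (\<sigma> t) < e"
      using sigma_ge[of s] s u assms(2) by (auto simp: dist_real_def split: if_splits)
  qed (use u in simp)
qed

lemma bounded_on_initial_segment: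
  fixes F :: "real \<Rightarrow> 'a::real_normed_vector"
  assumes "continuous_on T F"
  obtains C where "\<And>t. t \<in> T \<Longrightarrow> t \<le> N \<Longrightarrow> norm (F t) \<le> C"
proof -
  have "compact (T \<inter> {0..N})" by (intro closed_Int_compact closed_T compact_Icc)
  moreover have "continuous_on (T \<inter> {0..N}) (\<lambda>t. norm (F t))"
    using assms by (intro continuous_intros) (auto intro: continuous_on_subset)
  ultimately have "bounded ((\<lambda>t. norm (F t)) ` (T \<inter> {0..N}))"
    by (intro compact_imp_bounded compact_continuous_image)
  then show ?thesis using that T_nonneg unfolding bounded_real by fastforce
qed

lemma eventually_norm_less_exp:
  fixes F :: "real \<Rightarrow> real^'n^'m"
  assumes nonzero: "\<And>t. t \<in> T \<Longrightarrow> F t \<noteq> 0" and Upsilon: "Upsilon T F = 0" and \<epsilon>: "0 < \<epsilon>"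
  obtains N where "\<And>t. t \<in> T \<Longrightarrow> N < t \<Longrightarrow> norm (F t) < exp (\<epsilon> * t)"
proof -
  have "Limsup (inf at_top (principal T)) (\<lambda>t. ereal (ln (norm (F t)) / t)) < ereal \<epsilon>"
    using Upsilon \<epsilon> unfolding Upsilon_def by simp
  then have "\<forall>\<^sub>F t in inf at_top (principal T). ereal (ln (norm (F t)) / t) < ereal \<epsilon>"
    by (rule Limsup_lessD)
  then obtain N where N: "\<And>t. N \<le> t \<Longrightarrow> t \<in> T \<Longrightarrow> ln (norm (F t)) / t < \<epsilon>"
    unfolding eventually_inf_principal eventually_at_top_linorder by auto
  have "norm (F t) < exp (\<epsilon> * t)" if "t \<in> T" "max N 1 < t" for t
  proof -
    have "ln (norm (F t)) < \<epsilon> * t"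
      using N[of t] that by (simp add: divide_less_eq mult.commute)
    then show ?thesis using nonzero[OF that(1)] by (metis exp_less_mono exp_ln zero_less_norm_iff)
  qed
  then show ?thesis by (rule that)
qed

lemma subexponential_bound:
  fixes F :: "real \<Rightarrow> real^'n^'m"
  assumes "continuous_on T F" and "\<And>t. t \<in> T \<Longrightarrow> F t \<noteq> 0" and "Upsilon T F = 0" and \<epsilon>: "0 < \<epsilon>"
  shows "\<exists>K>0. \<forall>t\<in>T. norm (F t) \<le> K * exp (\<epsilon> * t)"
proof -
  obtain N where tail: "\<And>t. t \<in> T \<Longrightarrow> N < t \<Longrightarrow> norm (F t) < exp (\<epsilon> * t)"
    using eventually_norm_less_exp assms(2-4) by blast
  obtain C where C: "\<And>t. t \<in> T \<Longrightarrow> t \<le> N \<Longrightarrow> norm (F t) \<le> C"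
    using bounded_on_initial_segment[OF assms(1)] by blast
  show ?thesis
  proof (intro exI[of _ "max C 1"] conjI ballI)
    fix t assume t: "t \<in> T"
    consider "t \<le> N" | "N < t" by linarith
    then show "norm (F t) \<le> max C 1 * exp (\<epsilon> * t)"
    proof cases
      case 1
      have "norm (F t) \<le> max C 1 * 1" using C[OF t 1] by simp
      also have "\<dots> \<le> max C 1 * exp (\<epsilon> * t)" using \<epsilon> T_nonneg[OF t] by (intro mult_left_mono) auto
      finally show ?thesis .
    next
      case 2
      have "norm (F t) \<le> 1 * exp (\<epsilon> * t)" using tail[OF t 2] by simp
      also have "\<dots> \<le> max C 1 * exp (\<epsilon> * t)" by (intro mult_right_mono) auto
      finally show ?thesis .
    qed
  qed simp
qed

end

section \<open>\<open>\<Delta>\<close>-integration\<close>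

context syndetic_time_scale
begin

definition right_scattered_points :: "real set" where
  "right_scattered_points = {t\<in>T. t < \<sigma> t}"

definition left_scattered_points :: "real set" where
  "left_scattered_points = {t\<in>T. \<exists>e>0. \<forall>s\<in>T. \<not> (t - e < s \<and> s < t)}"

lemma countable_right_scattered_points: "countable right_scattered_points"
  by (rule countable_separated_by_intervals[where l = "\<lambda>t. t" and r = \<sigma>])
    (auto simp: right_scattered_points_def intro: sigma_le)

lemma countable_left_scattered_points: "countable left_scattered_points"
proof -
  have "\<forall>t\<in>left_scattered_points. \<exists>e. 0 < e \<and> (\<forall>s\<in>T. \<not> (t - e < s \<and> s < t))"
    by (auto simp: left_scattered_points_def)
  then obtain e where e: "\<forall>t\<in>left_scattered_points. 0 < e t \<and> (\<forall>s\<in>T. \<not> (t - e t < s \<and> s < t))"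
    by metis
  show ?thesis
  proof (rule countable_separated_by_intervals[where l = "\<lambda>t. t - e t" and r = "\<lambda>t. t"])
    fix x y assume xy: "x \<in> left_scattered_points" "y \<in> left_scattered_points" "x < y"
    then have "x \<in> T" by (simp add: left_scattered_points_def)
    then have "\<not> (y - e y < x \<and> x < y)" using e xy(2) by blast
    then show "x \<le> y - e y" using xy(3) by linarith
  qed (use e in auto)
qed

definition step_ext :: "(real \<Rightarrow> real) \<Rightarrow> real \<Rightarrow> real" where
  "step_ext h u = h (ts_floor u)"

lemma isCont_step_ext_outside:
  assumes u: "0 < u" "u \<notin> T"
  shows "isCont (step_ext h) u"
proof -
  let ?t = "ts_floor u"
  have t: "?t \<in> T" "u < \<sigma> ?t" using u ts_floor_in[of u] less_sigma_ts_floor[of u] by auto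
  then have "?t \<noteq> u" using u by auto
  with t ts_floor_le[of u] u have "?t < u" by simp
  show ?thesis
  proof (rule isCont_if_locally_constant[where S = "{?t<..<\<sigma> ?t}"])
    fix v assume "v \<in> {?t<..<\<sigma> ?t}"
    then have "ts_floor v = ?t" by (intro ts_floor_eqI[OF t(1)]) auto
    then show "step_ext h v = step_ext h u" by (simp add: step_ext_def)
  qed (use \<open>?t < u\<close> t in auto)
qed

lemma isCont_step_ext_dense:
  assumes u: "u \<in> T" "\<sigma> u = u" "u \<notin> left_scattered_points"
    and h: "continuous (at u within T) h"
  shows "isCont (step_ext h) u"
  unfolding continuous_within_eps_delta
proof (intro allI impI)
  fix e :: real assume e: "0 < e"
  obtain d where d: "0 < d" "\<forall>s\<in>T. dist s u < d \<longrightarrow> dist (h s) (h u) < e"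
    using h e unfolding continuous_within_eps_delta by blast
  obtain s1 where s1: "s1 \<in> T" "u - d < s1" "s1 < u"
    using u(1,3) d(1) by (auto simp: left_scattered_points_def)
  obtain s2 where s2: "s2 \<in> T" "u < s2" "s2 < u + d" using right_dense_approx[OF u(2) d(1)] by blast
  show "\<exists>d>0. \<forall>v\<in>UNIV. dist v u < d \<longrightarrow> dist (step_ext h v) (step_ext h u) < e"
  proof (intro exI[of _ "min (u - s1) (s2 - u)"] conjI ballI impI)
    fix v assume "dist v u < min (u - s1) (s2 - u)"
    then have v: "s1 < v" "v < s2" by (auto simp: dist_real_def)
    then have v0: "0 \<le> v" using T_nonneg[OF s1(1)] by simp
    have "s1 \<le> ts_floor v" "ts_floor v < s2"
      using le_ts_floor[OF s1(1), of v] ts_floor_le[OF v0] v by linarith+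
    then have "dist (ts_floor v) u < d" using s1 s2 by (auto simp: dist_real_def)
    then have "dist (h (ts_floor v)) (h u) < e" using d(2) ts_floor_in[OF v0] by blast
    then show "dist (step_ext h v) (step_ext h u) < e" by (simp add: step_ext_def ts_floor_eq[OF u(1)])
  qed (use s1 s2 in simp)
qed

lemma step_ext_continuous_on:
  assumes h: "continuous_right_dense h"
  shows "continuous_on (- ({0} \<union> right_scattered_points \<union> left_scattered_points)) (step_ext h)"
proof (rule continuous_at_imp_continuous_on, intro ballI)
  fix u assume u: "u \<in> - ({0} \<union> right_scattered_points \<union> left_scattered_points)"
  consider "u < 0" | "0 < u" "u \<notin> T" | "u \<in> T" using u by force
  then show "isCont (step_ext h) u"
  proof cases
    case 1
    have "step_ext h v = h (Sup {})" if "v < 0" for v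
    proof -
      have empty: "{s\<in>T. s \<le> v} = {}" using T_nonneg that by force
      show ?thesis unfolding step_ext_def ts_floor_def by (simp only: empty)
    qed
    then show ?thesis using 1 by (intro isCont_if_locally_constant[where S = "{..<0}"]) auto
  next
    case 2
    then show ?thesis by (rule isCont_step_ext_outside)
  next
    case 3
    moreover have "\<sigma> u = u" using u 3 sigma_ge[of u] by (auto simp: right_scattered_points_def)
    ultimately show ?thesis
      using u h by (intro isCont_step_ext_dense) (auto simp: continuous_right_dense_def)
  qed
qed

lemma step_ext_measurable:
  assumes "continuous_right_dense h"
  shows "step_ext h \<in> borel_measurable (lebesgue_on S)"
proof -
  have "countable ({0} \<union> right_scattered_points \<union> left_scattered_points)"
    using countable_right_scattered_points countable_left_scattered_points by simp
  then have "step_ext h \<in> borel_measurable borel"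
    using borel_measurable_continuous_countable_exceptions step_ext_continuous_on[OF assms] by blast
  then show ?thesis by (simp add: measurable_completion measurable_restrict_space1)
qed

lemma step_ext_bound:
  assumes h: "\<And>t. t \<in> T \<Longrightarrow> \<bar>h t\<bar> \<le> B * exp (- \<kappa> * t)" and u: "0 \<le> u"
  shows "\<bar>step_ext h u\<bar> \<le> B * exp (\<bar>\<kappa>\<bar> * M) * exp (- \<kappa> * u)"
proof -
  have "\<bar>h 0\<bar> \<le> B" using h[OF zero_in_T] by simp
  then have B: "0 \<le> B" by linarith
  have "0 \<le> u - ts_floor u" "u - ts_floor u \<le> M" using ts_floor_ge[OF u] ts_floor_le[OF u] by auto
  then have "\<kappa> * (u - ts_floor u) \<le> \<bar>\<kappa>\<bar> * M"
    by (meson abs_ge_self abs_ge_zero mult_mono)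
  then have "exp (- \<kappa> * ts_floor u) \<le> exp (\<bar>\<kappa>\<bar> * M) * exp (- \<kappa> * u)"
    by (simp add: exp_add[symmetric] algebra_simps)
  then have "B * exp (- \<kappa> * ts_floor u) \<le> B * (exp (\<bar>\<kappa>\<bar> * M) * exp (- \<kappa> * u))"
    using B by (rule mult_left_mono)
  then show ?thesis using h[OF ts_floor_in[OF u]] by (simp add: step_ext_def mult.assoc)
qed

definition delta_primitive :: "(real \<Rightarrow> real) \<Rightarrow> real \<Rightarrow> real" where
  "delta_primitive h t = integral {0..t} (step_ext h)"

end

locale exp_dominated = syndetic_time_scale T M for T M +
  fixes h :: "real \<Rightarrow> real" and B \<kappa> :: real
  assumes rd_cont: "continuous_right_dense h"
    and exp_bound: "\<And>t. t \<in> T \<Longrightarrow> \<bar>h t\<bar> \<le> B * exp (- \<kappa> * t)"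
begin

lemma step_ext_absolutely_integrable:
  assumes "S \<subseteq> {0..}" "S \<in> sets lebesgue" "(\<lambda>u. exp (- \<kappa> * u)) integrable_on S"
  shows "step_ext h absolutely_integrable_on S"
proof (rule measurable_bounded_by_integrable_imp_absolutely_integrable)
  show "step_ext h \<in> borel_measurable (lebesgue_on S)"
    by (rule step_ext_measurable[OF rd_cont])
  show "(\<lambda>u. B * exp (\<bar>\<kappa>\<bar> * M) * exp (- \<kappa> * u)) integrable_on S"
    using integrable_on_cmult_left[OF assms(3)] by simp
  show "norm (step_ext h u) \<le> B * exp (\<bar>\<kappa>\<bar> * M) * exp (- \<kappa> * u)" if "u \<in> S" for u
    using step_ext_bound[OF exp_bound] assms(1) that by auto
qed (use assms in auto)

lemma step_ext_integrable_Icc: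
  assumes "0 \<le> a"
  shows "step_ext h integrable_on {a..b}"
proof -
  have "(\<lambda>u. exp (- \<kappa> * u)) integrable_on {a..b}"
    by (intro integrable_continuous_interval continuous_intros)
  then have "step_ext h absolutely_integrable_on {a..b}"
    using assms by (intro step_ext_absolutely_integrable) auto
  then show ?thesis by (simp add: absolutely_integrable_on_def)
qed

lemma step_ext_integrable_atLeast:
  assumes "0 \<le> a" "0 < \<kappa>"
  shows "step_ext h integrable_on {a..}"
proof -
  have "step_ext h absolutely_integrable_on {a..}"
    using assms integrable_on_exp_minus_to_infinity[of \<kappa> a]
    by (intro step_ext_absolutely_integrable) auto
  then show ?thesis by (simp add: absolutely_integrable_on_def)
qed

lemma delta_primitive_diff:
  "0 \<le> s \<Longrightarrow> s \<le> t \<Longrightarrow> delta_primitive h t - delta_primitive h s = integral {s..t} (step_ext h)"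
  using Henstock_Kurzweil_Integration.integral_combine[of 0 s t "step_ext h"] step_ext_integrable_Icc[of 0 t]
  by (simp add: delta_primitive_def)

lemma has_delta_derivative_delta_primitive_right_dense:
  assumes t: "t \<in> T" and rd: "\<sigma> t = t"
  shows "has_delta_derivative T (delta_primitive h) (h t) t"
  unfolding has_delta_derivative_def rd
proof (intro allI impI)
  fix e :: real assume e: "0 < e"
  obtain d where d: "0 < d" "\<forall>s\<in>T. dist s t < d \<longrightarrow> dist (h s) (h t) < e"
    using rd_cont t rd e unfolding continuous_right_dense_def continuous_within_eps_delta by blast
  show "\<exists>d>0. \<forall>s\<in>T. \<bar>s - t\<bar> < d \<longrightarrow>
      norm (delta_primitive h t - delta_primitive h s - (t - s) *\<^sub>R h t) \<le> e * \<bar>t - s\<bar>"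
  proof (intro exI[of _ d] conjI ballI impI d(1))
    fix s assume s: "s \<in> T" "\<bar>s - t\<bar> < d"
    let ?a = "min s t" and ?b = "max s t"
    have a: "0 \<le> ?a" "?a \<in> T" using T_nonneg s t by (auto simp: min_def)
    have close: "\<bar>step_ext h v - h t\<bar> \<le> e" if "v \<in> {?a..?b}" for v
    proof -
      have v: "0 \<le> v" using that a(1) by (meson atLeastAtMost_iff order_trans)
      have "?a \<le> ts_floor v" "ts_floor v \<le> ?b" using le_ts_floor[OF a(2), of v] ts_floor_le[OF v] that by auto
      then have "dist (ts_floor v) t < d" using s by (auto simp: dist_real_def)
      then show ?thesis using d(2) ts_floor_in[OF v] by (force simp: step_ext_def dist_real_def)
    qed
    have "\<bar>integral {?a..?b} (step_ext h) - (?b - ?a) * h t\<bar> \<le> e * (?b - ?a)"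
      by (rule integral_deviation_le[OF _ step_ext_integrable_Icc[OF a(1)] close]) simp
    moreover have "delta_primitive h ?b - delta_primitive h ?a = integral {?a..?b} (step_ext h)"
      using delta_primitive_diff[OF a(1)] by simp
    ultimately show "norm (delta_primitive h t - delta_primitive h s - (t - s) *\<^sub>R h t) \<le> e * \<bar>t - s\<bar>"
      by (cases "s \<le> t") (auto simp: min_def max_def abs_minus_commute algebra_simps)
  qed
qed

lemma delta_primitive_continuous:
  assumes "0 \<le> t"
  shows "continuous (at t within T) (delta_primitive h)"
proof -
  have "continuous_on {0..t + 1} (delta_primitive h)"
    unfolding delta_primitive_def
    by (rule indefinite_integral_continuous_1[OF step_ext_integrable_Icc]) simp
  then have "continuous (at t within T \<inter> {0..t + 1}) (delta_primitive h)"
    using assms by (auto simp: continuous_on_eq_continuous_within intro: continuous_within_subset)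
  moreover have "at t within T \<inter> {0..t + 1} = at t within T"
    using T_nonneg by (intro at_within_nhd[of _ "{..<t + 1}"]) auto
  ultimately show ?thesis by simp
qed

lemma delta_primitive_sigma:
  assumes t: "t \<in> T"
  shows "delta_primitive h (\<sigma> t) - delta_primitive h t = (\<sigma> t - t) *\<^sub>R h t"
proof -
  have t0: "0 \<le> t" using T_nonneg[OF t] .
  have "delta_primitive h (\<sigma> t) - delta_primitive h t = integral {t..\<sigma> t} (step_ext h)"
    using delta_primitive_diff[OF t0 sigma_ge] .
  also have "\<dots> = integral {t..\<sigma> t} (\<lambda>_. h t)"
  proof (rule integral_spike[of "{\<sigma> t}"])
    fix v assume "v \<in> {t..\<sigma> t} - {\<sigma> t}"
    then have "ts_floor v = t" using ts_floor_eqI[OF t] by simp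
    then show "h t = step_ext h v" by (simp add: step_ext_def)
  qed simp
  also have "\<dots> = (\<sigma> t - t) *\<^sub>R h t" using sigma_ge[of t] by simp
  finally show ?thesis .
qed

lemma has_delta_derivative_delta_primitive:
  assumes t: "t \<in> T"
  shows "has_delta_derivative T (delta_primitive h) (h t) t"
proof (cases "\<sigma> t = t")
  case True
  then show ?thesis using has_delta_derivative_delta_primitive_right_dense[OF t] by simp
next
  case False
  then have "t < \<sigma> t" using sigma_ge[of t] by simp
  then show ?thesis
    using delta_primitive_continuous[OF T_nonneg[OF t]] delta_primitive_sigma[OF t] t
    by (intro delta_deriv_right_scatteredI)
qed

lemma integral_atLeast_eq:
  assumes t: "0 \<le> t" and \<kappa>: "0 < \<kappa>"
  shows "- integral {t..} (step_ext h) = delta_primitive h t - integral {0..} (step_ext h)"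
proof -
  have "(step_ext h has_integral (integral {0..t} (step_ext h) + integral {t..} (step_ext h)))
      ({0..t} \<union> {t..})"
  proof (rule has_integral_Un)
    have "{0..t} \<inter> {t..} = {t}" using t by auto
    then show "negligible ({0..t} \<inter> {t..})" by simp
  qed (use step_ext_integrable_Icc step_ext_integrable_atLeast[OF t \<kappa>] in \<open>auto intro: integrable_integral\<close>)
  moreover have "{0..t} \<union> {t..} = {0::real..}" using t by auto
  ultimately show ?thesis by (metis integral_unique delta_primitive_def add_diff_cancel_left' minus_diff_eq)
qed

lemma integral_atLeast_bound:
  assumes t: "0 \<le> t" and \<kappa>: "0 < \<kappa>"
  shows "\<bar>integral {t..} (step_ext h)\<bar> \<le> B * exp (\<bar>\<kappa>\<bar> * M) * (exp (- \<kappa> * t) / \<kappa>)"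
proof -
  let ?C = "B * exp (\<bar>\<kappa>\<bar> * M)"
  have int: "((\<lambda>u. ?C * exp (- \<kappa> * u)) has_integral ?C * (exp (- \<kappa> * t) / \<kappa>)) {t..}"
    using has_integral_mult_right[OF has_integral_exp_minus_to_infinity[OF \<kappa>, of t]] by simp
  have "norm (integral {t..} (step_ext h)) \<le> integral {t..} (\<lambda>u. ?C * exp (- \<kappa> * u))"
    using step_ext_bound[OF exp_bound] t int
    by (intro Henstock_Kurzweil_Integration.integral_norm_bound_integral step_ext_integrable_atLeast[OF t \<kappa>])
      (auto simp: has_integral_integrable)
  then show ?thesis using integral_unique[OF int] by simp
qed

lemma delta_primitive_bound:
  assumes t: "0 \<le> t" and \<kappa>: "\<kappa> \<le> 0"
  shows "\<bar>delta_primitive h t\<bar> \<le> B * exp (\<bar>\<kappa>\<bar> * M) * exp (- \<kappa> * t) * t"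
proof -
  let ?C = "B * exp (\<bar>\<kappa>\<bar> * M)"
  have "\<bar>step_ext h v - 0\<bar> \<le> ?C * exp (- \<kappa> * t)" if "v \<in> {0..t}" for v
  proof -
    have "\<bar>step_ext h v\<bar> \<le> ?C * exp (- \<kappa> * v)" using step_ext_bound[OF exp_bound] that by simp
    also have "\<dots> \<le> ?C * exp (- \<kappa> * t)"
      using that \<kappa> exp_bound[OF zero_in_T] by (intro mult_left_mono) (auto simp: mult_left_mono_neg)
    finally show ?thesis by simp
  qed
  then have "\<bar>integral {0..t} (step_ext h) - (t - 0) * 0\<bar> \<le> ?C * exp (- \<kappa> * t) * (t - 0)"
    by (intro integral_deviation_le[OF t step_ext_integrable_Icc[OF order_refl]])
  then show ?thesis by (simp add: delta_primitive_def)
qed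

end

section \<open>Variation of constants for a regular system\<close>

lemma Bhat_mult_axis:
  "Bhat T b t *v (c *\<^sub>R axis i 1) = (exp_delta_rate T (b $ i) t * c) *\<^sub>R axis i (1::real)"
  by (simp add: vec_eq_iff Bhat_def exp_delta_rate_def matrix_vector_mult_def axis_def if_distrib
      cong: if_cong)

locale regular_linear_system = syndetic_time_scale T M for T M +
  fixes A :: "real \<Rightarrow> real^'n^'n" and b :: "real^'n" and L :: "real \<Rightarrow> real^'n^'n"
  assumes invertible_L: "\<And>t. t \<in> T \<Longrightarrow> invertible (L t)"
    and Upsilon_L: "Upsilon T L = 0" and Upsilon_L_inv: "Upsilon T (\<lambda>t. matrix_inv (L t)) = 0"
    and reduces_to_Bhat:
      "\<And>y. solves_linear T (Bhat T b) (\<lambda>_. 0) y \<longleftrightarrow> solves_linear T A (\<lambda>_. 0) (\<lambda>t. L t *v y t)"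
begin

definition fundamental :: "'n \<Rightarrow> real \<Rightarrow> real^'n" where
  "fundamental i t = L t *v (exp (b $ i * t) *\<^sub>R axis i 1)"

lemma has_delta_derivative_fundamental:
  assumes "t \<in> T"
  shows "has_delta_derivative T (fundamental i) (A t *v fundamental i t) t"
proof -
  let ?y = "\<lambda>t. exp (b $ i * t) *\<^sub>R axis i (1::real)"
  have "solves_linear T (Bhat T b) (\<lambda>_. 0) ?y"
    unfolding solves_linear_def
    using delta_deriv_scaleR[OF delta_deriv_exp delta_deriv_const] by (auto simp: Bhat_mult_axis)
  then have "solves_linear T A (\<lambda>_. 0) (\<lambda>t. L t *v ?y t)" by (rule reduces_to_Bhat[THEN iffD1])
  then show ?thesis using assms unfolding solves_linear_def fundamental_def by simp
qed

lemma fundamental_nth: "fundamental i t $ r = exp (b $ i * t) * L t $ r $ i"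
  by (simp add: fundamental_def matrix_vector_mult_def axis_def if_distrib cong: if_cong)

lemma continuous_L_nth:
  assumes "t \<in> T"
  shows "continuous (at t within T) (\<lambda>s. L s $ r $ i)"
proof -
  have "continuous (at t within T) (\<lambda>s. exp (- (b $ i * s)) * fundamental i s $ r)"
    using delta_deriv_continuous[OF has_delta_derivative_fundamental[OF assms] assms]
    by (intro continuous_intros)
  then show ?thesis by (simp add: fundamental_nth exp_minus field_simps)
qed

lemma L_subexponential:
  assumes "0 < \<epsilon>"
  shows "\<exists>K>0. \<forall>t\<in>T. norm (L t) \<le> K * exp (\<epsilon> * t) \<and> norm (matrix_inv (L t)) \<le> K * exp (\<epsilon> * t)"
proof -
  have "continuous_on T L"
    unfolding continuous_on_eq_continuous_within by (blast intro: continuous_matrixI continuous_L_nth)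
  then obtain K1 where K1: "0 < K1" "\<forall>t\<in>T. norm (L t) \<le> K1 * exp (\<epsilon> * t)"
    using subexponential_bound[OF _ _ Upsilon_L assms] invertible_L invertible_nonzero by blast
  have "continuous_on T (\<lambda>s. matrix_inv (L s))"
    unfolding continuous_on_eq_continuous_within
    by (blast intro: continuous_within_matrix_inv continuous_L_nth invertible_L)
  then obtain K2 where K2: "0 < K2" "\<forall>t\<in>T. norm (matrix_inv (L t)) \<le> K2 * exp (\<epsilon> * t)"
    using subexponential_bound[OF _ _ Upsilon_L_inv assms] invertible_L invertible_nonzero by blast
  have "K1 * exp (\<epsilon> * t) \<le> max K1 K2 * exp (\<epsilon> * t)" "K2 * exp (\<epsilon> * t) \<le> max K1 K2 * exp (\<epsilon> * t)" for t
    by (simp_all add: mult_right_mono)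
  then show ?thesis using K1 K2 by (intro exI[of _ "max K1 K2"]) (auto intro: order_trans)
qed

end

locale variation_of_constants = regular_linear_system T M A b L
  for T M and A :: "real \<Rightarrow> real^'n^'n" and b L +
  fixes lam \<gamma> :: real
  assumes lam_less: "lam < \<gamma>"
begin

definition \<epsilon> :: real where "\<epsilon> = (\<gamma> - lam) / 3"

lemma \<epsilon>_pos: "0 < \<epsilon>"
  using lam_less by (simp add: \<epsilon>_def)

definition K :: real where
  "K = (SOME K. 0 < K \<and> (\<forall>t\<in>T. norm (L t) \<le> K * exp (\<epsilon> * t) \<and> norm (matrix_inv (L t)) \<le> K * exp (\<epsilon> * t)))"

lemma K_pos: "0 < K"
  and norm_L_le: "t \<in> T \<Longrightarrow> norm (L t) \<le> K * exp (\<epsilon> * t)"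
  and norm_L_inv_le: "t \<in> T \<Longrightarrow> norm (matrix_inv (L t)) \<le> K * exp (\<epsilon> * t)"
  using someI_ex[OF L_subexponential[OF \<epsilon>_pos]] unfolding K_def by auto

definition admissible :: "real \<Rightarrow> (real \<Rightarrow> real^'n) \<Rightarrow> bool" where
  "admissible N f \<longleftrightarrow> continuous_right_dense f \<and> (\<forall>t\<in>T. norm (f t) \<le> N * exp (- \<gamma> * t))"

definition coord_deriv :: "'n \<Rightarrow> (real \<Rightarrow> real^'n) \<Rightarrow> real \<Rightarrow> real" where
  "coord_deriv i f t = exp (- (b $ i) * \<sigma> t) * (matrix_inv (L (\<sigma> t)) *v f t) $ i"

definition decay :: "'n \<Rightarrow> real" where
  "decay i = \<gamma> + b $ i - \<epsilon>"

definition coord_bound :: "'n \<Rightarrow> real \<Rightarrow> real" where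
  "coord_bound i N = K * N * exp (\<bar>\<epsilon> - b $ i\<bar> * M)"

definition coord :: "'n \<Rightarrow> (real \<Rightarrow> real^'n) \<Rightarrow> real \<Rightarrow> real" where
  "coord i f t = (if 0 < decay i then - integral {t..} (step_ext (coord_deriv i f))
                  else delta_primitive (coord_deriv i f) t)"

definition solution :: "(real \<Rightarrow> real^'n) \<Rightarrow> real \<Rightarrow> real^'n" where
  "solution f t = (\<Sum>i\<in>UNIV. coord i f t *\<^sub>R fundamental i t)"

lemma continuous_right_dense_coord_deriv:
  assumes f: "continuous_right_dense f"
  shows "continuous_right_dense (coord_deriv i f)"
  unfolding continuous_right_dense_def
proof (intro ballI impI)
  fix t assume t: "t \<in> T" "\<sigma> t = t"
  have "continuous (at (\<sigma> t) within \<sigma> ` T) (\<lambda>u. matrix_inv (L u))"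
    using continuous_within_matrix_inv[OF continuous_L_nth invertible_L] t sigma_in
    by (auto intro: continuous_within_subset)
  then have "continuous (at t within T) (\<lambda>s. matrix_inv (L (\<sigma> s)))"
    using continuous_within_compose2[OF sigma_continuous[OF t]] by blast
  moreover have "continuous (at t within T) f" using f t by (simp add: continuous_right_dense_def)
  ultimately have "continuous (at t within T)
      (\<lambda>s. exp (- (b $ i) * \<sigma> s) * (\<Sum>j\<in>UNIV. matrix_inv (L (\<sigma> s)) $ i $ j * f s $ j))"
    using sigma_continuous[OF t] by (intro continuous_intros)
  then show "continuous (at t within T) (coord_deriv i f)"
    by (simp add: coord_deriv_def[abs_def] matrix_vector_mult_def)
qed

lemma coord_deriv_bound:
  assumes f: "admissible N f" and t: "t \<in> T"
  shows "\<bar>coord_deriv i f t\<bar> \<le> coord_bound i N * exp (- decay i * t)"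
proof -
  let ?s = "\<sigma> t" and ?c = "\<epsilon> - b $ i"
  have fb: "norm (f t) \<le> N * exp (- \<gamma> * t)" using f t by (simp add: admissible_def)
  have "norm (f 0) \<le> N" using f zero_in_T by (auto simp: admissible_def)
  then have N: "0 \<le> N" using norm_ge_zero order_trans by blast
  have s: "0 \<le> ?s - t" "?s - t \<le> M" using sigma_ge[of t] sigma_le_add[OF t] by auto
  have "\<bar>(matrix_inv (L ?s) *v f t) $ i\<bar> \<le> norm (matrix_inv (L ?s)) * norm (f t)"
    by (rule order_trans[OF component_le_norm_cart norm_matrix_vector_mult_le])
  also have "\<dots> \<le> (K * exp (\<epsilon> * ?s)) * (N * exp (- \<gamma> * t))"
    using norm_L_inv_le[OF sigma_in] fb K_pos by (intro mult_mono) auto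
  finally have "\<bar>coord_deriv i f t\<bar> \<le> exp (- (b $ i) * ?s) * (K * exp (\<epsilon> * ?s) * (N * exp (- \<gamma> * t)))"
    by (simp add: coord_deriv_def abs_mult mult_left_mono)
  also have "\<dots> = K * N * exp (?c * (?s - t) - decay i * t)"
    by (simp add: decay_def exp_add[symmetric] exp_diff algebra_simps)
  also have "\<dots> \<le> K * N * exp (\<bar>?c\<bar> * M - decay i * t)"
  proof -
    have "?c * (?s - t) \<le> \<bar>?c\<bar> * M" using s by (meson abs_ge_self abs_ge_zero mult_mono order_trans)
    then show ?thesis using K_pos N by (intro mult_left_mono) auto
  qed
  also have "\<dots> = coord_bound i N * exp (- decay i * t)"
    by (simp add: coord_bound_def exp_diff exp_minus field_simps)
  finally show ?thesis .
qed

lemma exp_dominated_coord_deriv: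
  assumes "admissible N f"
  shows "exp_dominated T M (coord_deriv i f) (coord_bound i N) (decay i)"
  using assms continuous_right_dense_coord_deriv coord_deriv_bound
  by unfold_locales (auto simp: admissible_def)

lemma has_delta_derivative_coord:
  assumes f: "admissible N f" and t: "t \<in> T"
  shows "has_delta_derivative T (coord i f) (coord_deriv i f t) t"
proof -
  interpret h: exp_dominated T M "coord_deriv i f" "coord_bound i N" "decay i"
    by (rule exp_dominated_coord_deriv[OF f])
  show ?thesis
  proof (cases "0 < decay i")
    case True
    let ?c = "integral {0..} (step_ext (coord_deriv i f))"
    have eq: "coord i f s = delta_primitive (coord_deriv i f) s - ?c" if "s \<in> T" for s
      using h.integral_atLeast_eq[OF T_nonneg[OF that] True] True by (simp add: coord_def)
    have "has_delta_derivative T (\<lambda>s. delta_primitive (coord_deriv i f) s - ?c) (coord_deriv i f t) t"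
      using h.has_delta_derivative_delta_primitive[OF t] by (simp add: has_delta_derivative_def)
    then show ?thesis using delta_deriv_cong[OF eq t] by simp
  next
    case False
    then have "coord i f = delta_primitive (coord_deriv i f)" by (simp add: coord_def fun_eq_iff)
    then show ?thesis using h.has_delta_derivative_delta_primitive[OF t] by simp
  qed
qed

lemma sum_coord_deriv_fundamental_sigma:
  assumes t: "t \<in> T"
  shows "(\<Sum>i\<in>UNIV. coord_deriv i f t *\<^sub>R fundamental i (\<sigma> t)) = f t"
proof -
  let ?c = "matrix_inv (L (\<sigma> t)) *v f t"
  have "coord_deriv i f t *\<^sub>R fundamental i (\<sigma> t) = ?c $ i *\<^sub>R column i (L (\<sigma> t))" for i
    by (simp add: coord_deriv_def fundamental_def matrix_vector_mult_scaleR matrix_vector_mult_basis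
        exp_minus field_simps)
  then have "(\<Sum>i\<in>UNIV. coord_deriv i f t *\<^sub>R fundamental i (\<sigma> t)) = L (\<sigma> t) *v ?c"
    by (simp add: matrix_mult_sum scalar_mult_eq_scaleR)
  also have "\<dots> = f t"
    using matrix_inv_right[OF invertible_L[OF sigma_in]] by (simp add: matrix_vector_mul_assoc)
  finally show ?thesis .
qed

lemma has_delta_derivative_solution:
  assumes f: "admissible N f" and t: "t \<in> T"
  shows "has_delta_derivative T (solution f) (A t *v solution f t + f t) t"
proof -
  have "has_delta_derivative T (solution f)
      (\<Sum>i\<in>UNIV. coord_deriv i f t *\<^sub>R fundamental i (\<sigma> t) + coord i f t *\<^sub>R (A t *v fundamental i t)) t"
    unfolding solution_def[abs_def]
    using has_delta_derivative_coord[OF f t] has_delta_derivative_fundamental[OF t]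
    by (intro delta_deriv_sum delta_deriv_scaleR t) auto
  moreover have "A t *v solution f t = (\<Sum>i\<in>UNIV. coord i f t *\<^sub>R (A t *v fundamental i t))"
    by (simp add: solution_def vec.sum matrix_vector_mult_scaleR)
  ultimately show ?thesis
    by (simp add: sum.distrib sum_coord_deriv_fundamental_sigma[OF t] add.commute)
qed

definition coord_const :: "'n \<Rightarrow> real" where
  "coord_const i = K * coord_bound i 1 * exp (\<bar>decay i\<bar> * M) * (if 0 < decay i then 1 / decay i else 1 / \<epsilon>)"

definition solution_const :: real where
  "solution_const = (\<Sum>i\<in>UNIV. coord_const i)"

lemma solution_const_nonneg: "0 \<le> solution_const"
  using K_pos \<epsilon>_pos by (auto simp: solution_const_def coord_const_def coord_bound_def intro: sum_nonneg)

lemma norm_fundamental_le: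
  assumes "t \<in> T"
  shows "norm (fundamental i t) \<le> K * exp (\<epsilon> * t) * exp (b $ i * t)"
proof -
  have "norm (fundamental i t) \<le> norm (L t) * exp (b $ i * t)"
    using norm_matrix_vector_mult_le[of "L t" "exp (b $ i * t) *\<^sub>R axis i 1"]
    by (simp add: fundamental_def)
  then show ?thesis using norm_L_le[OF assms] by (meson exp_ge_zero mult_right_mono order_trans)
qed

lemma coord_bound_weighted:
  assumes f: "admissible N f" and t: "t \<in> T"
  shows "\<bar>coord i f t\<bar> \<le> N * coord_bound i 1 * exp (\<bar>decay i\<bar> * M) * exp (- decay i * t)
           * (if 0 < decay i then 1 / decay i else t)"
proof -
  interpret h: exp_dominated T M "coord_deriv i f" "coord_bound i N" "decay i"
    by (rule exp_dominated_coord_deriv[OF f])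
  have "coord_bound i N = N * coord_bound i 1" by (simp add: coord_bound_def)
  then show ?thesis
    using h.integral_atLeast_bound[OF T_nonneg[OF t]] h.delta_primitive_bound[OF T_nonneg[OF t]]
    by (simp add: coord_def)
qed

lemma coord_term_bound:
  assumes f: "admissible N f" and t: "t \<in> T"
  shows "\<bar>coord i f t\<bar> * norm (fundamental i t) * exp (lam * t) \<le> N * coord_const i"
proof -
  let ?w = "if 0 < decay i then 1 / decay i else t"
  let ?C = "N * coord_bound i 1 * exp (\<bar>decay i\<bar> * M)"
  have "norm (f 0) \<le> N" using f zero_in_T by (auto simp: admissible_def)
  then have "0 \<le> N" using norm_ge_zero order_trans by blast
  then have C: "0 \<le> ?C" using K_pos by (simp add: coord_bound_def)
  have w: "0 \<le> ?w" using T_nonneg[OF t] by simp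
  have "\<bar>coord i f t\<bar> * norm (fundamental i t)
      \<le> (?C * exp (- decay i * t) * ?w) * (K * exp (\<epsilon> * t) * exp (b $ i * t))"
    using coord_bound_weighted[OF f t] norm_fundamental_le[OF t] C w by (intro mult_mono) auto
  then have "\<bar>coord i f t\<bar> * norm (fundamental i t) * exp (lam * t)
      \<le> (?C * exp (- decay i * t) * ?w) * (K * exp (\<epsilon> * t) * exp (b $ i * t)) * exp (lam * t)"
    by (rule mult_right_mono) simp
  also have "\<dots> = ?C * K * (?w * exp (- \<epsilon> * t))"
    by (simp add: decay_def \<epsilon>_def exp_add[symmetric] field_simps)
  also have "\<dots> \<le> ?C * K * (if 0 < decay i then 1 / decay i else 1 / \<epsilon>)"
  proof (intro mult_left_mono)
    have "\<epsilon> * t \<le> exp (\<epsilon> * t)" using exp_ge_add_one_self[of "\<epsilon> * t"] by linarith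
    then have "t * exp (- \<epsilon> * t) \<le> 1 / \<epsilon>"
      using \<epsilon>_pos by (simp add: exp_minus field_simps)
    moreover have "exp (- \<epsilon> * t) \<le> 1" using \<epsilon>_pos T_nonneg[OF t] by simp
    ultimately show "?w * exp (- \<epsilon> * t) \<le> (if 0 < decay i then 1 / decay i else 1 / \<epsilon>)"
      by (auto simp: divide_right_mono[of _ 1, simplified] mult_le_cancel_left1 field_simps)
  qed (use C K_pos in simp)
  also have "\<dots> = N * coord_const i" by (simp add: coord_const_def)
  finally show ?thesis .
qed

lemma solution_bound:
  assumes f: "admissible N f" and t: "t \<in> T"
  shows "norm (solution f t) * exp (lam * t) \<le> N * solution_const"
proof -
  have "norm (solution f t) * exp (lam * t) \<le> (\<Sum>i\<in>UNIV. \<bar>coord i f t\<bar> * norm (fundamental i t)) * exp (lam * t)"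
    unfolding solution_def by (intro mult_right_mono order_trans[OF norm_sum]) auto
  also have "\<dots> \<le> (\<Sum>i\<in>UNIV. N * coord_const i)"
    unfolding sum_distrib_right by (intro sum_mono coord_term_bound[OF f t])
  finally show ?thesis by (simp add: solution_const_def sum_distrib_left)
qed

lemma coord_deriv_lincomb:
  "coord_deriv i (\<lambda>s. a *\<^sub>R f s + c *\<^sub>R g s) t = a * coord_deriv i f t + c * coord_deriv i g t"
  by (simp add: coord_deriv_def matrix_vector_right_distrib matrix_vector_mult_scaleR algebra_simps)

lemma coord_lincomb:
  assumes f: "admissible Nf f" and g: "admissible Ng g" and t: "t \<in> T"
  shows "coord i (\<lambda>s. a *\<^sub>R f s + c *\<^sub>R g s) t = a * coord i f t + c * coord i g t"
proof -
  interpret hf: exp_dominated T M "coord_deriv i f" "coord_bound i Nf" "decay i"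
    by (rule exp_dominated_coord_deriv[OF f])
  interpret hg: exp_dominated T M "coord_deriv i g" "coord_bound i Ng" "decay i"
    by (rule exp_dominated_coord_deriv[OF g])
  have step_ext: "step_ext (coord_deriv i (\<lambda>s. a *\<^sub>R f s + c *\<^sub>R g s))
      = (\<lambda>u. a * step_ext (coord_deriv i f) u + c * step_ext (coord_deriv i g) u)"
    by (simp add: step_ext_def coord_deriv_lincomb fun_eq_iff)
  have "integral S (\<lambda>u. a * step_ext (coord_deriv i f) u + c * step_ext (coord_deriv i g) u)
      = a * integral S (step_ext (coord_deriv i f)) + c * integral S (step_ext (coord_deriv i g))"
    if "step_ext (coord_deriv i f) integrable_on S" "step_ext (coord_deriv i g) integrable_on S" for S
    using integral_add[OF integrable_on_cmult_left[OF that(1)] integrable_on_cmult_left[OF that(2)]]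
    by simp
  then show ?thesis
    using hf.step_ext_integrable_atLeast hg.step_ext_integrable_atLeast
      hf.step_ext_integrable_Icc hg.step_ext_integrable_Icc T_nonneg[OF t]
    by (simp add: coord_def delta_primitive_def step_ext)
qed

lemma solution_lincomb:
  assumes "admissible Nf f" "admissible Ng g" "t \<in> T"
  shows "solution (\<lambda>s. a *\<^sub>R f s + c *\<^sub>R g s) t = a *\<^sub>R solution f t + c *\<^sub>R solution g t"
  using coord_lincomb[OF assms]
  by (simp add: solution_def scaleR_sum_right sum.distrib[symmetric] algebra_simps)

lemma solution_extension:
  obtains Q :: "(real \<Rightarrow> real^'n) \<Rightarrow> real \<Rightarrow> real^'n"
  where "\<And>f g a c. Q (\<lambda>s. a *\<^sub>R f s + c *\<^sub>R g s) = (\<lambda>s. a *\<^sub>R Q f s + c *\<^sub>R Q g s)"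
    and "\<And>f t. in_C T \<gamma> f \<Longrightarrow> continuous_right_dense f \<Longrightarrow> t \<in> T \<Longrightarrow> Q f t = solution f t"
    and "\<And>f. in_C T lam (Q f)"
proof -
  define W where "W = {f :: real \<Rightarrow> real^'n. in_C T \<gamma> f \<and> continuous_right_dense f}"
  define P where "P f = (\<lambda>t. if t \<in> T then solution f t else 0)" for f :: "real \<Rightarrow> real^'n"
  have adm: "admissible (weighted_norm T \<gamma> f) f" if "f \<in> W" for f
    using that norm_le_weighted_norm by (auto simp: W_def admissible_def)
  obtain Q where Q_lincomb: "\<And>f g a c. Q (\<lambda>s. a *\<^sub>R f s + c *\<^sub>R g s) = (\<lambda>s. a *\<^sub>R Q f s + c *\<^sub>R Q g s)"
    and Q_eq: "\<And>f. f \<in> W \<Longrightarrow> Q f = P f" and Q_in_C: "\<And>f. Q f \<in> {g. in_C T lam g}"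
  proof (rule linear_extension_into_subspace[of W P "{g. in_C T lam g}"])
    show "(\<lambda>s. a *\<^sub>R f s + c *\<^sub>R g s) \<in> W" if "f \<in> W" "g \<in> W" for f g a c
      using that in_C_lincomb continuous_right_dense_lincomb by (auto simp: W_def)
    show "P (\<lambda>s. a *\<^sub>R f s + c *\<^sub>R g s) = (\<lambda>s. a *\<^sub>R P f s + c *\<^sub>R P g s)" if "f \<in> W" "g \<in> W" for f g a c
      using solution_lincomb[OF adm[OF that(1)] adm[OF that(2)]] by (auto simp: P_def)
    show "P f \<in> {g. in_C T lam g}" if "f \<in> W" for f
    proof -
      have "norm (P f t) * exp (lam * t) \<le> weighted_norm T \<gamma> f * solution_const" if "t \<in> T" for t
        using solution_bound[OF adm[OF \<open>f \<in> W\<close>] that] that by (simp add: P_def)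
      then have "bdd_above ((\<lambda>t. norm (P f t) * exp (lam * t)) ` T)" by (rule bdd_aboveI2)
      then show ?thesis by (simp add: in_C_def)
    qed
    have "in_C T k (\<lambda>_. 0 :: real^'n)" for k
      unfolding in_C_def by (rule bdd_aboveI2[where M = 0]) simp
    then show "(\<lambda>_. 0) \<in> W" "(\<lambda>_. 0 :: real^'n) \<in> {g. in_C T lam g}"
      unfolding W_def continuous_right_dense_def by simp_all
  qed (use in_C_lincomb in auto)
  show ?thesis
  proof (rule that)
    show "Q f t = solution f t" if "in_C T \<gamma> f" "continuous_right_dense f" "t \<in> T" for f t
      using Q_eq[of f] that by (simp add: W_def P_def)
  qed (use Q_lincomb Q_in_C in auto)
qed

lemma solution_operator:
  "\<exists>C>0. \<exists>\<L> :: (real \<Rightarrow> real^'n) \<Rightarrow> (real \<Rightarrow> real^'n).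
     (\<forall>f g. (\<forall>t\<in>T. f t = g t) \<longrightarrow> (\<forall>t\<in>T. \<L> f t = \<L> g t)) \<and>
     (\<forall>f g a b. in_C T \<gamma> f \<and> in_C T \<gamma> g \<longrightarrow>
        (\<forall>t\<in>T. \<L> (\<lambda>s. a *\<^sub>R f s + b *\<^sub>R g s) t = a *\<^sub>R \<L> f t + b *\<^sub>R \<L> g t)) \<and>
     (\<forall>f. in_C T \<gamma> f \<longrightarrow> in_C T lam (\<L> f)) \<and>
     (\<forall>f. in_C T \<gamma> f \<and> rd_continuous T f \<longrightarrow>
        solves_linear T A f (\<L> f) \<and>
        weighted_norm T lam (\<L> f) \<le> C * weighted_norm T \<gamma> f)"
proof -
  obtain Q :: "(real \<Rightarrow> real^'n) \<Rightarrow> real \<Rightarrow> real^'n"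
    where Q_lincomb: "\<And>f g a c. Q (\<lambda>s. a *\<^sub>R f s + c *\<^sub>R g s) = (\<lambda>s. a *\<^sub>R Q f s + c *\<^sub>R Q g s)"
    and Q_eq: "\<And>f t. in_C T \<gamma> f \<Longrightarrow> continuous_right_dense f \<Longrightarrow> t \<in> T \<Longrightarrow> Q f t = solution f t"
    and Q_in_C: "\<And>f. in_C T lam (Q f)"
    using solution_extension by blast
  \<comment> \<open>Restricting to \<open>T\<close> first makes the operator depend only on the values on \<open>T\<close>.\<close>
  define R where "R f = (\<lambda>t. if t \<in> T then f t else 0)" for f :: "real \<Rightarrow> real^'n"
  have R_lincomb: "R (\<lambda>s. a *\<^sub>R f s + c *\<^sub>R g s) = (\<lambda>s. a *\<^sub>R R f s + c *\<^sub>R R g s)" for f g a c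
    by (auto simp: R_def)
  show ?thesis
  proof (intro exI[of _ "solution_const + 1"] exI[of _ "\<lambda>f. Q (R f)"] conjI allI impI ballI)
    fix f g :: "real \<Rightarrow> real^'n" and t assume "\<forall>t\<in>T. f t = g t"
    then have "R f = R g" by (auto simp: R_def)
    then show "Q (R f) t = Q (R g) t" by simp
  next
    fix f :: "real \<Rightarrow> real^'n" assume f: "in_C T \<gamma> f \<and> rd_continuous T f"
    have RfT: "\<And>t. t \<in> T \<Longrightarrow> R f t = f t" by (simp add: R_def)
    have Rf: "admissible (weighted_norm T \<gamma> f) (R f)" "in_C T \<gamma> (R f)" "continuous_right_dense (R f)"
      using f norm_le_weighted_norm in_C_cong[OF RfT] continuous_right_dense_cong[OF RfT]
        continuous_right_dense_if_rd_continuous by (auto simp: admissible_def RfT)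
    show "solves_linear T A f (Q (R f))"
      unfolding solves_linear_def
      using has_delta_derivative_solution[OF Rf(1)] delta_deriv_cong[OF Q_eq[OF Rf(2,3)]] Q_eq[OF Rf(2,3)] RfT
      by simp
    have "norm (Q (R f) t) * exp (lam * t) \<le> (solution_const + 1) * weighted_norm T \<gamma> f" if "t \<in> T" for t
    proof -
      have "norm (Q (R f) t) * exp (lam * t) \<le> weighted_norm T \<gamma> f * solution_const"
        using solution_bound[OF Rf(1) that] Q_eq[OF Rf(2,3) that] by simp
      also have "\<dots> \<le> (solution_const + 1) * weighted_norm T \<gamma> f"
        using weighted_norm_nonneg[OF conjunct1[OF f] that] by (simp add: algebra_simps)
      finally show ?thesis .
    qed
    then show "weighted_norm T lam (Q (R f)) \<le> (solution_const + 1) * weighted_norm T \<gamma> f"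
      using zero_in_T by (intro weighted_norm_le) auto
  qed (auto simp: solution_const_nonneg Q_lincomb Q_in_C R_lincomb R_def add_nonneg_pos)
qed

end

lemma syndetic_time_scaleI:
  assumes "time_scale T" "bdd_below T" "Inf T = 0" "\<not> bdd_above T" "syndetic T"
  obtains M where "syndetic_time_scale T M"
proof -
  have T: "closed T" "T \<noteq> {}" using assms(1) by (auto simp: time_scale_def)
  obtain M where "\<And>t. t \<in> T \<Longrightarrow> graininess T t \<le> M"
    using assms(5) unfolding syndetic_def bdd_above_def by auto
  moreover have "0 \<in> T" using closed_contains_Inf[OF T(2) assms(2) T(1)] assms(3) by simp
  moreover have "0 \<le> t" if "t \<in> T" for t using cInf_lower[OF that assms(2)] assms(3) by simp
  ultimately have "syndetic_time_scale T M" using T(1) assms(4) by (simp add: syndetic_time_scale_def)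
  then show ?thesis by (rule that)
qed

lemma (in syndetic_time_scale) regular_linear_systemE:
  fixes A :: "real \<Rightarrow> real^'n^'n"
  assumes "regular_system T A"
  obtains b L where "regular_linear_system T M A b L"
proof -
  from assms obtain b :: "real^'n" and L where "\<forall>t\<in>T. invertible (L t)" "Upsilon T L = 0"
    "Upsilon T (\<lambda>t. matrix_inv (L t)) = 0"
    "\<forall>y. solves_linear T (Bhat T b) (\<lambda>_. 0) y \<longleftrightarrow> solves_linear T A (\<lambda>_. 0) (\<lambda>t. L t *v y t)"
    unfolding regular_system_def by blast
  then have "regular_linear_system T M A b L"
    by (intro regular_linear_system.intro syndetic_time_scale_axioms regular_linear_system_axioms.intro) auto
  then show ?thesis by (rule that)
qed

theorem mainTheorem4:
  fixes T :: "real set" and A :: "real \<Rightarrow> real^'n^'n" and lam \<gamma> :: real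
  assumes "time_scale T" and "bdd_below T" and "Inf T = 0" and "\<not> bdd_above T"
    and "syndetic T"
    and "bounded (A ` T)" and "rd_continuous T A"
    and "regular_system T A"
    and "0 < lam" and "lam < \<gamma>"
  shows "\<exists>C>0. \<exists>\<L> :: (real \<Rightarrow> real^'n) \<Rightarrow> (real \<Rightarrow> real^'n).
     (\<forall>f g. (\<forall>t\<in>T. f t = g t) \<longrightarrow> (\<forall>t\<in>T. \<L> f t = \<L> g t)) \<and>
     (\<forall>f g a b. in_C T \<gamma> f \<and> in_C T \<gamma> g \<longrightarrow>
        (\<forall>t\<in>T. \<L> (\<lambda>s. a *\<^sub>R f s + b *\<^sub>R g s) t = a *\<^sub>R \<L> f t + b *\<^sub>R \<L> g t)) \<and>
     (\<forall>f. in_C T \<gamma> f \<longrightarrow> in_C T lam (\<L> f)) \<and>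
     (\<forall>f. in_C T \<gamma> f \<and> rd_continuous T f \<longrightarrow>
        solves_linear T A f (\<L> f) \<and>
        weighted_norm T lam (\<L> f) \<le> C * weighted_norm T \<gamma> f)"
proof -
  obtain M where "syndetic_time_scale T M" using assms(1-5) by (rule syndetic_time_scaleI)
  then obtain b L where "regular_linear_system T M A b L"
    using assms(8) by (rule syndetic_time_scale.regular_linear_systemE)
  then have "variation_of_constants T M A b L lam \<gamma>"
    using assms(10) by (simp add: variation_of_constants_def variation_of_constants_axioms_def)
  then show ?thesis by (rule variation_of_constants.solution_operator)
qed

end
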